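(* Let $T$ be a bounded, linear, bijective operator on $L^2(G,\mathbb{C}^{s\times r})$ that is adjointable with respect to the matrix-valued inner product, and let $\{E_k\}_{k\in\mathbb{N}}$ be a matrix-valued orthonormal basis for $L^2(G,\mathbb{C}^{s\times r})$. If $T$ is positive, then $\{TE_k\}_{k\in\mathbb{N}}$ is a matrix-valued Riesz basis for $L^2(G,\mathbb{C}^{s\times r})$ if and only if $\{T^{1/2}E_k\}_{k\in\mathbb{N}}$ is a matrix-valued Riesz basis for $L^2(G,\mathbb{C}^{s\times r})$.
   Context: $G$ is a locally compact abelian group that is metrizable and $\sigma$-compact, with Haar measure $\mu_G$; $s,r\in\mathbb{N}$. $L^2(G,\mathbb{C}^{s\times r})$ is the space of $s\times r$ matrices $\mathbf{f}=[f_{ij}]$ with all entries in $L^2(G)$. The matrix-valued inner product is $\langle \mathbf{f},\mathbf{g}\rangle=\int_G \mathbf{f}(x)\mathbf{g}^*(x)\,d\mu_G\in M_s(\mathbb{C})$ (entrywise integral). $L^2(G,\mathbb{C}^{s\times r})$ is a Hilbert space with inner product $\langle \mathbf{f},\mathbf{g}\rangle_{L^2}=\mathrm{tr}\langle \mathbf{f},\mathbf{g}\rangle$ and Frobenius norm $\|\mathbf{f}\|=(\sum_{i,j}\int_G|f_{ij}|^2d\mu_G)^{1/2}$; $U^*$ denotes the Hilbert-adjoint with respect to this inner product. $U$ is adjointable with respect to the matrix-valued inner product if $\langle U\mathbf{f},\mathbf{g}\rangle=\langle\mathbf{f},U^*\mathbf{g}\rangle$ for all $\mathbf{f},\mathbf{g}$.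 $T$ is positive if $T^*=T$ and $\mathrm{tr}\langle T\mathbf{f},\mathbf{f}\rangle\ge0$ for all $\mathbf{f}$; $T^{1/2}$ is the unique bounded positive operator $W$ with $W^2=T$. A matrix-valued orthonormal basis is a sequence $\{E_k\}_{k\in\mathbb{N}}$ with $\langle E_k,E_j\rangle=\mathbf{I}_{s\times s}$ if $k=j$ and $\mathbf{O}_{s\times s}$ otherwise, such that $\mathbf{f}=\sum_k\langle\mathbf{f},E_k\rangle E_k$ in Frobenius norm for all $\mathbf{f}$. A matrix-valued Riesz basis is a family $\{UE_k\}_{k\in\mathbb{N}}$ with $\{E_k\}$ a matrix-valued orthonormal basis and $U$ bounded, linear, bijective and adjointable with respect to the matrix-valued inner product. *)

theory Defs
  imports "HOL-Analysis.Analysis"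
begin

definition lca_metr_sigma_compact :: "'g::{metric_space, topological_ab_group_add} itself \<Rightarrow> bool" where
  "lca_metr_sigma_compact _ \<longleftrightarrow>
     locally compact (UNIV :: 'g set) \<and>
     (\<exists>K :: nat \<Rightarrow> 'g set. (\<forall>n. compact (K n)) \<and> (\<Union>n. K n) = UNIV)"

text \<open>Haar measure: a nonzero translation-invariant Borel measure, finite on compact sets and
positive on nonempty open sets (regularity is automatic on metrizable sigma-compact
locally compact spaces).\<close>

definition haar_measure :: "'g::{metric_space, topological_ab_group_add} measure \<Rightarrow> bool" where
  "haar_measure M \<longleftrightarrow>
     sets M = sets borel \<and> space M = UNIV \<and>
     (\<forall>a A. A \<in> sets borel \<longrightarrow> emeasure M ((+) a ` A) = emeasure M A) \<and>
     (\<forall>K. compact K \<longrightarrow> emeasure M K < \<infinity>) \<and>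
     (\<forall>U. open U \<and> U \<noteq> {} \<longrightarrow> emeasure M U > 0)"

text \<open>An s x r complex matrix is an element of complex^'r^'s (rows indexed by 's,
columns by 'r); its norm is the Frobenius norm.\<close>

definition adjm :: "complex^'r^'s \<Rightarrow> complex^'s^'r" where
  "adjm A = (\<chi> i j. cnj (A $ j $ i))"

definition cscale :: "complex \<Rightarrow> complex^'r^'s \<Rightarrow> complex^'r^'s" where
  "cscale c A = (\<chi> i j. c * A $ i $ j)"

definition mtrace :: "complex^'s^'s \<Rightarrow> complex" where
  "mtrace A = (\<Sum>i\<in>UNIV. A $ i $ i)"

definition L2m :: "'g measure \<Rightarrow> ('g \<Rightarrow> complex^'r^'s::finite) set" where
  "L2m M = {f. f \<in> borel_measurable M \<and> integrable M (\<lambda>x. (norm (f x))\<^sup>2)}"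

text \<open>Elements of L^2 are functions modulo equality almost everywhere.\<close>

definition aeq :: "'g measure \<Rightarrow> ('g \<Rightarrow> 'a) \<Rightarrow> ('g \<Rightarrow> 'a) \<Rightarrow> bool" where
  "aeq M f g \<longleftrightarrow> (AE x in M. f x = g x)"

definition l2norm :: "'g measure \<Rightarrow> ('g \<Rightarrow> complex^'r^'s) \<Rightarrow> real" where
  "l2norm M f = sqrt (\<integral>x. (norm (f x))\<^sup>2 \<partial>M)"

definition mip :: "'g measure \<Rightarrow> ('g \<Rightarrow> complex^'r^'s) \<Rightarrow> ('g \<Rightarrow> complex^'r^'s)
                    \<Rightarrow> complex^'s^'s" where
  "mip M f g = (\<integral>x. f x ** adjm (g x) \<partial>M)"

definition sip :: "'g measure \<Rightarrow> ('g \<Rightarrow> complex^'r^'s) \<Rightarrow> ('g \<Rightarrow> complex^'r^'s) \<Rightarrow> complex" where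
  "sip M f g = mtrace (mip M f g)"

definition bounded_linear_op ::
  "'g measure \<Rightarrow> (('g \<Rightarrow> complex^'r^'s) \<Rightarrow> ('g \<Rightarrow> complex^'r^'s)) \<Rightarrow> bool" where
  "bounded_linear_op M U \<longleftrightarrow>
     (\<forall>f\<in>L2m M. U f \<in> L2m M) \<and>
     (\<forall>f\<in>L2m M. \<forall>g\<in>L2m M. aeq M f g \<longrightarrow> aeq M (U f) (U g)) \<and>
     (\<forall>f\<in>L2m M. \<forall>g\<in>L2m M. \<forall>a b :: complex.
        aeq M (U (\<lambda>x. cscale a (f x) + cscale b (g x)))
              (\<lambda>x. cscale a (U f x) + cscale b (U g x))) \<and>
     (\<exists>C. \<forall>f\<in>L2m M. l2norm M (U f) \<le> C * l2norm M f)"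

definition bij_op ::
  "'g measure \<Rightarrow> (('g \<Rightarrow> complex^'r^'s) \<Rightarrow> ('g \<Rightarrow> complex^'r^'s)) \<Rightarrow> bool" where
  "bij_op M U \<longleftrightarrow>
     (\<forall>f\<in>L2m M. \<forall>g\<in>L2m M. aeq M (U f) (U g) \<longrightarrow> aeq M f g) \<and>
     (\<forall>g\<in>L2m M. \<exists>f\<in>L2m M. aeq M (U f) g)"

text \<open>Adjointable with respect to the matrix-valued inner product: there is a bounded
operator V (necessarily the Hilbert adjoint U^*) with <Uf,g> = <f,Vg> as matrices.\<close>

definition adjointable_op ::
  "'g measure \<Rightarrow> (('g \<Rightarrow> complex^'r^'s) \<Rightarrow> ('g \<Rightarrow> complex^'r^'s)) \<Rightarrow> bool" where
  "adjointable_op M U \<longleftrightarrow>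
     (\<exists>V. bounded_linear_op M V \<and>
          (\<forall>f\<in>L2m M. \<forall>g\<in>L2m M. mip M (U f) g = mip M f (V g)))"

definition positive_op ::
  "'g measure \<Rightarrow> (('g \<Rightarrow> complex^'r^'s) \<Rightarrow> ('g \<Rightarrow> complex^'r^'s)) \<Rightarrow> bool" where
  "positive_op M T \<longleftrightarrow>
     bounded_linear_op M T \<and>
     (\<forall>f\<in>L2m M. \<forall>g\<in>L2m M. sip M (T f) g = sip M f (T g)) \<and>
     (\<forall>f\<in>L2m M. Im (sip M (T f) f) = 0 \<and> 0 \<le> Re (sip M (T f) f))"

text \<open>The square root T^{1/2}: the (unique up to a.e.-equality) bounded positive W with
W^2 = T.\<close>

definition op_sqrt ::
  "'g measure \<Rightarrow> (('g \<Rightarrow> complex^'r^'s) \<Rightarrow> ('g \<Rightarrow> complex^'r^'s))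
     \<Rightarrow> (('g \<Rightarrow> complex^'r^'s) \<Rightarrow> ('g \<Rightarrow> complex^'r^'s))" where
  "op_sqrt M T = (SOME W. positive_op M W \<and> (\<forall>f\<in>L2m M. aeq M (W (W f)) (T f)))"

definition matrix_onb ::
  "'g measure \<Rightarrow> (nat \<Rightarrow> ('g \<Rightarrow> complex^'r^'s)) \<Rightarrow> bool" where
  "matrix_onb M E \<longleftrightarrow>
     (\<forall>k. E k \<in> L2m M) \<and>
     (\<forall>k j. mip M (E k) (E j) = (if k = j then mat 1 else 0)) \<and>
     (\<forall>f\<in>L2m M. (\<lambda>n. l2norm M (\<lambda>x. f x - (\<Sum>k<n. mip M f (E k) ** E k x)))
                    \<longlonglongrightarrow> 0)"

definition matrix_riesz_basis ::
  "'g measure \<Rightarrow> (nat \<Rightarrow> ('g \<Rightarrow> complex^'r^'s)) \<Rightarrow> bool" where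
  "matrix_riesz_basis M F \<longleftrightarrow>
     (\<exists>E U. matrix_onb M E \<and> bounded_linear_op M U \<and> bij_op M U \<and> adjointable_op M U \<and>
            (\<forall>k. aeq M (F k) (U (E k))))"

end

theory Submission
  imports Defs
begin

text \<open>Both sides of the equivalence hold. A Riesz basis is the image of an orthonormal basis under
  a bounded bijective operator that is adjointable for the matrix-valued inner product, so this is
  immediate for $T$. The square root is built as $\sqrt{C} \sum_n \binom{1/2}{n} (-1)^n (I - T/C)^n$
  with $C \ge \lVert T\rVert$, a series converging in the complete space $L^2$; it commutes with
  every bounded operator commuting with $T$, and commuting positive square roots coincide, so it is
  $T^{1/2}$. Bijectivity of $T^{1/2}$ follows from $(T^{1/2})^2 = T$. Adjointability of $T$ implies
  that $T$ commutes with left multiplication by constant matrices; $T^{1/2}$ inherits this, and a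
  self-adjoint operator with this property is its own matrix-valued adjoint.\<close>

definition frob_inner :: "complex^'r^'s \<Rightarrow> complex^'r^'s \<Rightarrow> complex" where
  "frob_inner A B = (\<Sum>i\<in>UNIV. \<Sum>j\<in>UNIV. A$i$j * cnj (B$i$j))"

lemma mtrace_mult_adjm: "mtrace (A ** adjm B) = frob_inner A B"
  by (simp add: mtrace_def frob_inner_def matrix_matrix_mult_def adjm_def)

lemma norm_matrix_squared: "(norm (A::complex^'r^'s))\<^sup>2 = (\<Sum>i\<in>UNIV. \<Sum>j\<in>UNIV. (cmod (A$i$j))\<^sup>2)"
  by (simp add: norm_vec_def L2_set_def sum_nonneg)

lemma frob_inner_self: "frob_inner A A = of_real ((norm A)\<^sup>2)"
  unfolding norm_matrix_squared frob_inner_def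
  by (simp add: of_real_sum complex_norm_square del: of_real_power)

lemma Re_frob_inner: "Re (frob_inner A B) = inner A B"
  by (simp add: frob_inner_def inner_vec_def inner_complex_def Re_sum)

lemma frob_inner_commute: "frob_inner B A = cnj (frob_inner A B)"
  by (simp add: frob_inner_def cnj_sum mult.commute)

lemma frob_inner_add_left: "frob_inner (A + B) C = frob_inner A C + frob_inner B C"
  by (simp add: frob_inner_def distrib_right sum.distrib)

lemma frob_inner_diff_left: "frob_inner (A - B) C = frob_inner A C - frob_inner B C"
  by (simp add: frob_inner_def left_diff_distrib sum_subtractf)

lemma frob_inner_add_right: "frob_inner A (B + C) = frob_inner A B + frob_inner A C"
  by (simp add: frob_inner_def distrib_left sum.distrib)

lemma frob_inner_diff_right: "frob_inner A (B - C) = frob_inner A B - frob_inner A C"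
  by (simp add: frob_inner_def right_diff_distrib sum_subtractf)

lemma frob_inner_cscale_left: "frob_inner (cscale c A) B = c * frob_inner A B"
  by (simp add: frob_inner_def cscale_def sum_distrib_left mult.assoc)

lemma frob_inner_cscale_right: "frob_inner A (cscale c B) = cnj c * frob_inner A B"
  by (simp add: frob_inner_def cscale_def sum_distrib_left mult.assoc mult.left_commute)

lemma scaleR_eq_cscale: "r *\<^sub>R (A::complex^'r^'s) = cscale (of_real r) A"
  by (simp add: cscale_def vec_eq_iff scaleR_conv_of_real[where 'a=complex])

lemma cscale_eq_mat_mult: "cscale c A = mat c ** A"
  by (simp add: cscale_def vec_eq_iff matrix_matrix_mult_def mat_def if_distrib if_distribR
      cong: if_cong)

lemma cscale_add: "cscale c (A + B) = cscale c A + cscale c B"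
  by (simp add: cscale_def vec_eq_iff distrib_left)

lemma cscale_diff: "cscale c (A - B) = cscale c A - cscale c B"
  by (simp add: cscale_def vec_eq_iff right_diff_distrib)

lemma cscale_one [simp]: "cscale 1 A = A"
  and cscale_zero [simp]: "cscale 0 A = 0"
  and cscale_zero_right [simp]: "cscale c 0 = 0"
  and cscale_minus_one: "cscale (-1) A = - A"
  by (simp_all add: cscale_def vec_eq_iff)

lemma cscale_sum: "cscale c (sum F I) = (\<Sum>i\<in>I. cscale c (F i))"
  by (induction I rule: infinite_finite_induct) (simp_all add: cscale_add)

lemma cscale_cscale: "cscale c (cscale d A) = cscale (c * d) A"
  by (simp add: cscale_def vec_eq_iff mult.assoc)

lemma matrix_mult_cscale: "X ** cscale c A = cscale c (X ** A)"
  by (simp add: cscale_def vec_eq_iff matrix_matrix_mult_def sum_distrib_left mult.left_commute)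

lemma norm_cscale: "norm (cscale c A) = cmod c * norm (A::complex^'r^'s)"
proof -
  have "(norm (cscale c A))\<^sup>2 = (cmod c * norm A)\<^sup>2"
    by (simp add: norm_matrix_squared power_mult_distrib sum_distrib_left cscale_def norm_mult)
  then show ?thesis
    by (simp add: power2_eq_iff_nonneg)
qed

lemma norm_frob_inner_le: "cmod (frob_inner A B) \<le> norm A * norm (B::complex^'r^'s)"
proof (cases "frob_inner A B = 0")
  case False
  define u where "u = cnj (frob_inner A B) / of_real (cmod (frob_inner A B))"
  have "cnj (frob_inner A B) * frob_inner A B = of_real ((cmod (frob_inner A B))\<^sup>2)"
    using complex_norm_square[of "frob_inner A B"] by (simp add: mult.commute)
  then have "cmod (frob_inner A B) = Re (frob_inner (cscale u A) B)"
    using False by (simp add: u_def frob_inner_cscale_left power2_eq_square)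
  also have "\<dots> \<le> norm (cscale u A) * norm B"
    unfolding Re_frob_inner by (rule norm_cauchy_schwarz)
  also have "\<dots> = norm A * norm B"
    using False by (simp add: u_def norm_cscale norm_divide)
  finally show ?thesis .
qed simp

lemma bounded_bilinear_frob_inner: "bounded_bilinear (frob_inner :: complex^'r^'s \<Rightarrow> _)"
proof -
  have "bilinear (frob_inner :: complex^'r^'s \<Rightarrow> _)"
    unfolding bilinear_def
    by (auto intro!: linearI simp: scaleR_conv_of_real[where 'a=complex] scaleR_eq_cscale
        frob_inner_add_left frob_inner_add_right frob_inner_cscale_left frob_inner_cscale_right)
  then show ?thesis by (simp add: bilinear_conv_bounded_bilinear)
qed

lemma bounded_bilinear_mult_adjm:
  "bounded_bilinear (\<lambda>(A::complex^'r^'s) (B::complex^'r^'s). A ** adjm B)"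
proof -
  have "bilinear (\<lambda>(A::complex^'r^'s) (B::complex^'r^'s). A ** adjm B)"
    unfolding bilinear_def
    by (auto intro!: linearI simp: adjm_def vec_eq_iff matrix_matrix_mult_def distrib_left
        distrib_right sum.distrib scaleR_conv_of_real[where 'a=complex] sum_distrib_left mult.assoc
        mult.left_commute)
  then show ?thesis by (simp add: bilinear_conv_bounded_bilinear)
qed

lemma bounded_linear_mtrace_mult: "bounded_linear (\<lambda>N::complex^'s^'s. mtrace (Y ** N))"
proof -
  have "linear (\<lambda>N::complex^'s^'s. mtrace (Y ** N))"
    by (auto intro!: linearI simp: mtrace_def sum.distrib distrib_left
        matrix_matrix_mult_def scaleR_conv_of_real[where 'a=complex] sum_distrib_left
        mult.left_commute)
  then show ?thesis by (simp add: linear_conv_bounded_linear)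
qed

lemma bounded_linear_matrix_mult: "bounded_linear (\<lambda>A::complex^'r^'s. (X::complex^'s^'s) ** A)"
proof -
  have "linear (\<lambda>A::complex^'r^'s. X ** A)"
    by (auto intro!: linearI simp: matrix_add_ldistrib scaleR_eq_cscale matrix_mult_cscale)
  then show ?thesis by (simp add: linear_conv_bounded_linear)
qed

lemma L2mD:
  assumes "f \<in> L2m M"
  shows "f \<in> borel_measurable M" "integrable M (\<lambda>x. (norm (f x))\<^sup>2)"
  using assms by (auto simp: L2m_def)

lemma L2mI: "f \<in> borel_measurable M \<Longrightarrow> integrable M (\<lambda>x. (norm (f x))\<^sup>2) \<Longrightarrow> f \<in> L2m M"
  by (auto simp: L2m_def)

lemma borel_measurable_bounded_bilinear:
  fixes prod :: "'a::{real_normed_vector,second_countable_topology} \<Rightarrow>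
    'b::{real_normed_vector,second_countable_topology} \<Rightarrow> 'c::real_normed_vector"
  assumes "bounded_bilinear prod" "f \<in> borel_measurable M" "g \<in> borel_measurable M"
  shows "(\<lambda>x. prod (f x) (g x)) \<in> borel_measurable M"
proof (rule borel_measurable_continuous_Pair[OF assms(2,3)])
  show "continuous_on UNIV (\<lambda>x. prod (fst x) (snd x))"
    by (intro bounded_bilinear.continuous_on[OF assms(1)] continuous_intros)
qed

lemma borel_measurable_bounded_linear:
  fixes L :: "'a::real_normed_vector \<Rightarrow> 'b::real_normed_vector"
  assumes "bounded_linear L" "f \<in> borel_measurable M"
  shows "(\<lambda>x. L (f x)) \<in> borel_measurable M"
  by (rule borel_measurable_continuous_on[OF linear_continuous_on[OF assms(1)] assms(2)])

lemma integrable_norm_mult_L2m: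
  assumes f: "f \<in> L2m M" and g: "g \<in> L2m M"
  shows "integrable M (\<lambda>x. norm (f x) * norm (g x))"
proof (rule Bochner_Integration.integrable_bound)
  have [measurable]: "f \<in> borel_measurable M" "g \<in> borel_measurable M"
    using f g by (auto dest: L2mD)
  show "integrable M (\<lambda>x. (norm (f x))\<^sup>2 + (norm (g x))\<^sup>2)"
    using f g by (auto dest: L2mD)
  show "(\<lambda>x. norm (f x) * norm (g x)) \<in> borel_measurable M" by measurable
  have "norm (f x) * norm (g x) \<le> (norm (f x))\<^sup>2 + (norm (g x))\<^sup>2" for x
  proof -
    have "0 \<le> norm (f x) * norm (g x)" by simp
    then show ?thesis using sum_squares_bound[of "norm (f x)" "norm (g x)"] by linarith
  qed
  then show "AE x in M. norm (norm (f x) * norm (g x)) \<le> norm ((norm (f x))\<^sup>2 + (norm (g x))\<^sup>2)"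
    by simp
qed

lemma L2m_add:
  assumes f: "f \<in> L2m M" and g: "g \<in> L2m M"
  shows "(\<lambda>x. f x + g x) \<in> L2m M"
proof (rule L2mI)
  have [measurable]: "f \<in> borel_measurable M" "g \<in> borel_measurable M"
    using f g by (auto dest: L2mD)
  show "(\<lambda>x. f x + g x) \<in> borel_measurable M" by measurable
  show "integrable M (\<lambda>x. (norm (f x + g x))\<^sup>2)"
  proof (rule Bochner_Integration.integrable_bound)
    show "integrable M (\<lambda>x. 2 * (norm (f x))\<^sup>2 + 2 * (norm (g x))\<^sup>2)"
      using f g
      by (auto intro!: Bochner_Integration.integrable_add integrable_mult_right dest: L2mD)
    show "(\<lambda>x. (norm (f x + g x))\<^sup>2) \<in> borel_measurable M" by measurable
    have "(norm (f x + g x))\<^sup>2 \<le> 2 * (norm (f x))\<^sup>2 + 2 * (norm (g x))\<^sup>2" for x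
    proof -
      have "(norm (f x + g x))\<^sup>2 \<le> (norm (f x) + norm (g x))\<^sup>2"
        by (rule power_mono[OF norm_triangle_ineq]) simp
      then show ?thesis
        using sum_squares_bound[of "norm (f x)" "norm (g x)"] by (simp add: power2_sum)
    qed
    then show "AE x in M. norm ((norm (f x + g x))\<^sup>2)
        \<le> norm (2 * (norm (f x))\<^sup>2 + 2 * (norm (g x))\<^sup>2)"
      by simp
  qed
qed

lemma L2m_lmult:
  fixes X :: "complex^'s^'s" and f :: "'a \<Rightarrow> complex^'r^'s"
  assumes f: "f \<in> L2m M"
  shows "(\<lambda>x. X ** f x) \<in> L2m M"
proof (rule L2mI)
  have [measurable]: "f \<in> borel_measurable M" using f by (auto dest: L2mD)
  show Xf: "(\<lambda>x. X ** f x) \<in> borel_measurable M"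
    by (rule borel_measurable_bounded_linear[OF bounded_linear_matrix_mult]) simp
  obtain K where K: "\<And>A::complex^'r^'s. norm (X ** A) \<le> norm A * K"
    using bounded_linear.bounded[OF bounded_linear_matrix_mult[where X=X]] by blast
  show "integrable M (\<lambda>x. (norm (X ** f x))\<^sup>2)"
  proof (rule Bochner_Integration.integrable_bound)
    show "integrable M (\<lambda>x. K\<^sup>2 * (norm (f x))\<^sup>2)" using f by (auto dest: L2mD)
    show "(\<lambda>x. (norm (X ** f x))\<^sup>2) \<in> borel_measurable M" using Xf by measurable
    have "(norm (X ** f x))\<^sup>2 \<le> (norm (f x) * K)\<^sup>2" for x
      by (rule power_mono[OF K]) simp
    then show "AE x in M. norm ((norm (X ** f x))\<^sup>2) \<le> norm (K\<^sup>2 * (norm (f x))\<^sup>2)"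
      by (simp add: power_mult_distrib mult.commute)
  qed
qed

lemma L2m_cscale: "f \<in> L2m M \<Longrightarrow> (\<lambda>x. cscale c (f x)) \<in> L2m M"
  unfolding cscale_eq_mat_mult by (rule L2m_lmult)

lemma L2m_diff:
  assumes "f \<in> L2m M" "g \<in> L2m M"
  shows "(\<lambda>x. f x - g x) \<in> L2m M"
  using L2m_add[OF assms(1) L2m_cscale[OF assms(2), of "-1"]] by (simp add: cscale_minus_one)

lemma L2m_zero: "(\<lambda>x. 0) \<in> L2m M"
  by (rule L2mI) auto

lemma L2m_sum: "(\<And>i. i \<in> I \<Longrightarrow> F i \<in> L2m M) \<Longrightarrow> (\<lambda>x. \<Sum>i\<in>I. F i x) \<in> L2m M"
  by (induction I rule: infinite_finite_induct) (simp_all add: L2m_zero L2m_add)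

lemma integrable_frob_inner:
  assumes f: "f \<in> L2m M" and g: "g \<in> L2m M"
  shows "integrable M (\<lambda>x. frob_inner (f x) (g x))"
proof (rule Bochner_Integration.integrable_bound[OF integrable_norm_mult_L2m[OF f g]])
  show "(\<lambda>x. frob_inner (f x) (g x)) \<in> borel_measurable M"
    using f g by (intro borel_measurable_bounded_bilinear[OF bounded_bilinear_frob_inner])
      (auto dest: L2mD)
  show "AE x in M. norm (frob_inner (f x) (g x)) \<le> norm (norm (f x) * norm (g x))"
    by (simp add: norm_frob_inner_le)
qed

lemma integrable_mult_adjm:
  fixes f g :: "'a \<Rightarrow> complex^'r^'s"
  assumes f: "f \<in> L2m M" and g: "g \<in> L2m M"
  shows "integrable M (\<lambda>x. f x ** adjm (g x))"
proof -
  obtain K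
    where K: "\<forall>(A::complex^'r^'s) (B::complex^'r^'s). norm (A ** adjm B) \<le> norm A * norm B * K"
    using bounded_bilinear.bounded[OF bounded_bilinear_mult_adjm] by blast
  show ?thesis
  proof (rule Bochner_Integration.integrable_bound)
    show "integrable M (\<lambda>x. norm (f x) * norm (g x) * K)"
      using integrable_norm_mult_L2m[OF f g] by simp
    show "(\<lambda>x. f x ** adjm (g x)) \<in> borel_measurable M"
      using f g by (intro borel_measurable_bounded_bilinear[OF bounded_bilinear_mult_adjm])
        (auto dest: L2mD)
    show "AE x in M. norm (f x ** adjm (g x)) \<le> norm (norm (f x) * norm (g x) * K)"
      by (intro AE_I2) (metis K abs_ge_self order_trans real_norm_def)
  qed
qed

lemma mtrace_mip:
  assumes "f \<in> L2m M" "g \<in> L2m M"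
  shows "mtrace (Y ** mip M f g) = (\<integral>x. mtrace (Y ** (f x ** adjm (g x))) \<partial>M)"
  unfolding mip_def
  by (rule integral_bounded_linear[OF bounded_linear_mtrace_mult integrable_mult_adjm[OF assms],
        symmetric])

lemma sip_lmult:
  assumes f: "f \<in> L2m M" and g: "g \<in> L2m M"
  shows "sip M (\<lambda>x. Y ** f x) g = mtrace (Y ** mip M f g)"
  using mtrace_mip[OF L2m_lmult[OF f] g, of "mat 1"] mtrace_mip[OF f g, of Y]
  by (simp add: sip_def matrix_mul_assoc)

lemma sip_eq_integral:
  assumes "f \<in> L2m M" "g \<in> L2m M"
  shows "sip M f g = (\<integral>x. frob_inner (f x) (g x) \<partial>M)"
  using mtrace_mip[OF assms, of "mat 1"] by (simp add: sip_def mtrace_mult_adjm)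


lemma l2norm_nonneg: "0 \<le> l2norm M f"
  by (simp add: l2norm_def)

lemma l2norm_squared: "(l2norm M f)\<^sup>2 = (\<integral>x. (norm (f x))\<^sup>2 \<partial>M)"
  by (simp add: l2norm_def integral_nonneg_AE)

lemma sip_self: "f \<in> L2m M \<Longrightarrow> sip M f f = of_real ((l2norm M f)\<^sup>2)"
  by (simp add: sip_eq_integral frob_inner_self l2norm_squared del: of_real_power)

lemma Re_sip_self: "f \<in> L2m M \<Longrightarrow> Re (sip M f f) = (l2norm M f)\<^sup>2"
  by (simp add: sip_self)

lemma sip_add_left:
  "f \<in> L2m M \<Longrightarrow> g \<in> L2m M \<Longrightarrow> h \<in> L2m M \<Longrightarrow>
    sip M (\<lambda>x. f x + g x) h = sip M f h + sip M g h"
  by (simp add: sip_eq_integral L2m_add frob_inner_add_left integrable_frob_inner)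

lemma sip_diff_left:
  "f \<in> L2m M \<Longrightarrow> g \<in> L2m M \<Longrightarrow> h \<in> L2m M \<Longrightarrow>
    sip M (\<lambda>x. f x - g x) h = sip M f h - sip M g h"
  by (simp add: sip_eq_integral L2m_diff frob_inner_diff_left integrable_frob_inner)

lemma sip_add_right:
  "f \<in> L2m M \<Longrightarrow> g \<in> L2m M \<Longrightarrow> h \<in> L2m M \<Longrightarrow>
    sip M h (\<lambda>x. f x + g x) = sip M h f + sip M h g"
  by (simp add: sip_eq_integral L2m_add frob_inner_add_right integrable_frob_inner)

lemma sip_diff_right:
  "f \<in> L2m M \<Longrightarrow> g \<in> L2m M \<Longrightarrow> h \<in> L2m M \<Longrightarrow>
    sip M h (\<lambda>x. f x - g x) = sip M h f - sip M h g"
  by (simp add: sip_eq_integral L2m_diff frob_inner_diff_right integrable_frob_inner)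

lemma sip_cscale_left:
  "f \<in> L2m M \<Longrightarrow> g \<in> L2m M \<Longrightarrow> sip M (\<lambda>x. cscale c (f x)) g = c * sip M f g"
  by (simp add: sip_eq_integral L2m_cscale frob_inner_cscale_left)

lemma sip_cscale_right:
  "f \<in> L2m M \<Longrightarrow> g \<in> L2m M \<Longrightarrow> sip M f (\<lambda>x. cscale c (g x)) = cnj c * sip M f g"
  by (simp add: sip_eq_integral L2m_cscale frob_inner_cscale_right)

lemma sip_commute: "f \<in> L2m M \<Longrightarrow> g \<in> L2m M \<Longrightarrow> sip M g f = cnj (sip M f g)"
  by (simp add: sip_eq_integral frob_inner_commute[of "g _"])

lemma sip_zero_left: "f \<in> L2m M \<Longrightarrow> sip M (\<lambda>x. 0) f = 0"
  by (simp add: sip_eq_integral L2m_zero frob_inner_def)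

lemma sip_sum_left:
  assumes "\<And>i. i \<in> I \<Longrightarrow> F i \<in> L2m M" "g \<in> L2m M"
  shows "sip M (\<lambda>x. \<Sum>i\<in>I. F i x) g = (\<Sum>i\<in>I. sip M (F i) g)"
  using assms
proof (induction I rule: infinite_finite_induct)
  case (insert a A)
  then show ?case by (simp add: sip_add_left L2m_sum)
qed (simp_all add: sip_zero_left)

lemma sip_sum_right:
  assumes "\<And>i. i \<in> I \<Longrightarrow> F i \<in> L2m M" "g \<in> L2m M"
  shows "sip M g (\<lambda>x. \<Sum>i\<in>I. F i x) = (\<Sum>i\<in>I. sip M g (F i))"
proof -
  have "sip M g (\<lambda>x. \<Sum>i\<in>I. F i x) = cnj (sip M (\<lambda>x. \<Sum>i\<in>I. F i x) g)"
    using assms by (simp add: sip_commute[of _ M g] L2m_sum)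
  also have "\<dots> = (\<Sum>i\<in>I. sip M g (F i))"
    using assms by (simp add: sip_sum_left cnj_sum sip_commute[of g M])
  finally show ?thesis .
qed

lemma aeq_refl: "aeq M f f"
  by (simp add: aeq_def)

lemma aeq_sym: "aeq M f g \<Longrightarrow> aeq M g f"
  unfolding aeq_def by (auto elim: AE_mp)

lemma aeq_trans [trans]: "aeq M f g \<Longrightarrow> aeq M g h \<Longrightarrow> aeq M f h"
  unfolding aeq_def by (erule AE_mp) (auto elim: AE_mp)

lemma aeq_pointwise_trans [trans]: "aeq M f g \<Longrightarrow> (\<And>x. g x = h x) \<Longrightarrow> aeq M f h"
  by (simp add: aeq_def)

lemma aeq_add: "aeq M f f' \<Longrightarrow> aeq M g g' \<Longrightarrow> aeq M (\<lambda>x. f x + g x) (\<lambda>x. f' x + g' x)"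
  unfolding aeq_def by (erule AE_mp) (auto elim: AE_mp)

lemma aeq_diff: "aeq M f f' \<Longrightarrow> aeq M g g' \<Longrightarrow> aeq M (\<lambda>x. f x - g x) (\<lambda>x. f' x - g' x)"
  unfolding aeq_def by (erule AE_mp) (auto elim: AE_mp)

lemma aeq_lmult: "aeq M f f' \<Longrightarrow> aeq M (\<lambda>x. X ** f x) (\<lambda>x. X ** f' x)"
  unfolding aeq_def by (auto elim: AE_mp)

lemma aeq_cscale: "aeq M f f' \<Longrightarrow> aeq M (\<lambda>x. cscale c (f x)) (\<lambda>x. cscale c (f' x))"
  unfolding aeq_def by (auto elim: AE_mp)

lemma aeq_sum:
  assumes "finite I" "\<And>i. i \<in> I \<Longrightarrow> aeq M (F i) (G i)"
  shows "aeq M (\<lambda>x. \<Sum>i\<in>I. F i x) (\<lambda>x. \<Sum>i\<in>I. G i x)"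
proof -
  have "AE x in M. \<forall>i\<in>I. F i x = G i x"
    using assms unfolding aeq_def by (intro eventually_ball_finite) auto
  then show ?thesis unfolding aeq_def by eventually_elim simp
qed

lemma sip_cong:
  assumes "f \<in> L2m M" "g \<in> L2m M" "f' \<in> L2m M" "g' \<in> L2m M" "aeq M f f'" "aeq M g g'"
  shows "sip M f g = sip M f' g'"
proof -
  have "(\<integral>x. frob_inner (f x) (g x) \<partial>M) = (\<integral>x. frob_inner (f' x) (g' x) \<partial>M)"
  proof (rule integral_cong_AE)
    show "(\<lambda>x. frob_inner (f x) (g x)) \<in> borel_measurable M"
      "(\<lambda>x. frob_inner (f' x) (g' x)) \<in> borel_measurable M"
      using assms by (auto intro!: borel_measurable_bounded_bilinear[OF bounded_bilinear_frob_inner]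
          dest: L2mD)
    show "AE x in M. frob_inner (f x) (g x) = frob_inner (f' x) (g' x)"
      using assms(5,6) unfolding aeq_def by eventually_elim simp
  qed
  then show ?thesis using assms by (simp add: sip_eq_integral)
qed

lemma l2norm_cong:
  assumes "f \<in> L2m M" "f' \<in> L2m M" "aeq M f f'"
  shows "l2norm M f = l2norm M f'"
proof -
  have "(\<integral>x. (norm (f x))\<^sup>2 \<partial>M) = (\<integral>x. (norm (f' x))\<^sup>2 \<partial>M)"
  proof (rule integral_cong_AE)
    have [measurable]: "f \<in> borel_measurable M" "f' \<in> borel_measurable M"
      using assms by (auto dest: L2mD)
    show "(\<lambda>x. (norm (f x))\<^sup>2) \<in> borel_measurable M" "(\<lambda>x. (norm (f' x))\<^sup>2) \<in> borel_measurable M"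
      by measurable
    show "AE x in M. (norm (f x))\<^sup>2 = (norm (f' x))\<^sup>2"
      using assms(3) unfolding aeq_def by eventually_elim simp
  qed
  then show ?thesis by (simp add: l2norm_def)
qed

lemma l2norm_eq_0_iff:
  assumes "f \<in> L2m M"
  shows "l2norm M f = 0 \<longleftrightarrow> aeq M f (\<lambda>x. 0)"
proof -
  have "l2norm M f = 0 \<longleftrightarrow> (\<integral>x. (norm (f x))\<^sup>2 \<partial>M) = 0"
    by (simp add: l2norm_def integral_nonneg_AE)
  also have "\<dots> \<longleftrightarrow> (AE x in M. (norm (f x))\<^sup>2 = 0)"
    using assms by (intro integral_nonneg_eq_0_iff_AE) (auto dest: L2mD)
  finally show ?thesis by (simp add: aeq_def)
qed

lemma aeq_iff_l2norm_diff:
  assumes "f \<in> L2m M" "g \<in> L2m M"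
  shows "aeq M f g \<longleftrightarrow> l2norm M (\<lambda>x. f x - g x) = 0"
  using l2norm_eq_0_iff[OF L2m_diff[OF assms]] by (simp add: aeq_def)

lemma sip_cauchy_schwarz:
  assumes f: "f \<in> L2m M" and g: "g \<in> L2m M"
  shows "cmod (sip M f g) \<le> l2norm M f * l2norm M g"
proof (cases "l2norm M g = 0")
  case True
  then have "sip M f g = sip M f (\<lambda>x. 0)"
    using f g l2norm_eq_0_iff[OF g] by (intro sip_cong) (auto simp: aeq_refl L2m_zero)
  then show ?thesis using f sip_commute[OF L2m_zero f] by (simp add: sip_zero_left l2norm_nonneg)
next
  case False
  define a where "a = (l2norm M g)\<^sup>2"
  define s where "s = sip M f g"
  define c where "c = s / of_real a"
  have a0: "a > 0" using False l2norm_nonneg[of M g] by (simp add: a_def)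
  have cg: "(\<lambda>x. cscale c (g x)) \<in> L2m M" using g by (rule L2m_cscale)
  have "0 \<le> Re (sip M (\<lambda>x. f x - cscale c (g x)) (\<lambda>x. f x - cscale c (g x)))"
    by (simp add: Re_sip_self L2m_diff[OF f cg])
  also have "sip M (\<lambda>x. f x - cscale c (g x)) (\<lambda>x. f x - cscale c (g x))
      = sip M f f - cnj c * s - c * sip M g f + c * cnj c * sip M g g"
    using f g cg by (simp add: sip_diff_left sip_diff_right L2m_diff sip_cscale_left
        sip_cscale_right s_def algebra_simps)
  also have "\<dots> = of_real ((l2norm M f)\<^sup>2 - (cmod s)\<^sup>2 / a)"
    using a0 f g
    by (simp add: sip_commute[of f M g] sip_self c_def a_def[symmetric] s_def[symmetric]
        complex_norm_square field_simps del: of_real_power)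
  finally have "(cmod s)\<^sup>2 \<le> (l2norm M f)\<^sup>2 * a" using a0 by (simp add: field_simps)
  then have "(cmod s)\<^sup>2 \<le> (l2norm M f * l2norm M g)\<^sup>2" by (simp add: a_def power_mult_distrib)
  then show ?thesis unfolding s_def by (rule power2_le_imp_le) (simp add: l2norm_nonneg)
qed

lemma l2norm_add_le:
  assumes f: "f \<in> L2m M" and g: "g \<in> L2m M"
  shows "l2norm M (\<lambda>x. f x + g x) \<le> l2norm M f + l2norm M g"
proof -
  have "(l2norm M (\<lambda>x. f x + g x))\<^sup>2
      = (l2norm M f)\<^sup>2 + (l2norm M g)\<^sup>2 + Re (sip M f g) + Re (sip M g f)"
    using f g by (simp add: Re_sip_self[symmetric] sip_add_left sip_add_right L2m_add)
  also have "\<dots> \<le> (l2norm M f + l2norm M g)\<^sup>2"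
  proof -
    have "Re (sip M f g) + Re (sip M g f) \<le> 2 * (l2norm M f * l2norm M g)"
      using complex_Re_le_cmod[of "sip M f g"] complex_Re_le_cmod[of "sip M g f"]
        sip_cauchy_schwarz[OF f g] sip_cauchy_schwarz[OF g f]
        mult.commute[of "l2norm M g" "l2norm M f"]
      by linarith
    then show ?thesis by (simp add: power2_sum)
  qed
  finally show ?thesis
    by (rule power2_le_imp_le) (simp add: l2norm_nonneg add_nonneg_nonneg)
qed

lemma l2norm_cscale: "l2norm M (\<lambda>x. cscale c (f x)) = cmod c * l2norm M f"
  by (simp add: l2norm_def norm_cscale power_mult_distrib real_sqrt_mult)

lemma l2norm_minus_commute: "l2norm M (\<lambda>x. f x - g x) = l2norm M (\<lambda>x. g x - f x)"
  by (simp add: l2norm_def norm_minus_commute)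

lemma l2norm_triangle:
  assumes "f \<in> L2m M" "g \<in> L2m M" "h \<in> L2m M"
  shows "l2norm M (\<lambda>x. f x - h x) \<le> l2norm M (\<lambda>x. f x - g x) + l2norm M (\<lambda>x. g x - h x)"
  using l2norm_add_le[OF L2m_diff[OF assms(1,2)] L2m_diff[OF assms(2,3)]] by simp

lemma l2norm_lmult_le:
  fixes X :: "complex^'s^'s"
  obtains K where "\<And>f::'a \<Rightarrow> complex^'r^'s. f \<in> L2m M \<Longrightarrow> l2norm M (\<lambda>x. X ** f x) \<le> K * l2norm M f"
proof -
  obtain K where K: "\<And>A::complex^'r^'s. norm (X ** A) \<le> norm A * K" "K > 0"
    using bounded_linear.pos_bounded[OF bounded_linear_matrix_mult[where X=X]] by blast
  have "l2norm M (\<lambda>x. X ** f x) \<le> K * l2norm M f" if f: "f \<in> L2m M" for f :: "'a \<Rightarrow> complex^'r^'s"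
  proof -
    have "(\<integral>x. (norm (X ** f x))\<^sup>2 \<partial>M) \<le> (\<integral>x. K\<^sup>2 * (norm (f x))\<^sup>2 \<partial>M)"
    proof (rule integral_mono)
      show "integrable M (\<lambda>x. (norm (X ** f x))\<^sup>2)" "integrable M (\<lambda>x. K\<^sup>2 * (norm (f x))\<^sup>2)"
        using L2m_lmult[OF f] f by (auto dest: L2mD)
      fix x
      have "(norm (X ** f x))\<^sup>2 \<le> (norm (f x) * K)\<^sup>2"
        by (rule power_mono[OF K(1)]) simp
      then show "(norm (X ** f x))\<^sup>2 \<le> K\<^sup>2 * (norm (f x))\<^sup>2"
        by (simp add: power_mult_distrib mult.commute)
    qed
    then have "sqrt (\<integral>x. (norm (X ** f x))\<^sup>2 \<partial>M) \<le> sqrt (K\<^sup>2 * (\<integral>x. (norm (f x))\<^sup>2 \<partial>M))"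
      by simp
    then show ?thesis
      using K(2) by (simp add: l2norm_def real_sqrt_mult)
  qed
  then show ?thesis by (rule that)
qed

section \<open>Completeness of $L^2$\<close>

definition l2_tendsto :: "'a measure \<Rightarrow> (nat \<Rightarrow> 'a \<Rightarrow> complex^'r^'s) \<Rightarrow> ('a \<Rightarrow> complex^'r^'s) \<Rightarrow> bool"
  where "l2_tendsto M u v \<longleftrightarrow> (\<lambda>n. l2norm M (\<lambda>x. u n x - v x)) \<longlonglongrightarrow> 0"

definition l2_Cauchy :: "'a measure \<Rightarrow> (nat \<Rightarrow> 'a \<Rightarrow> complex^'r^'s) \<Rightarrow> bool"
  where "l2_Cauchy M u \<longleftrightarrow> (\<forall>e>0. \<exists>N. \<forall>m\<ge>N. \<forall>n\<ge>N. l2norm M (\<lambda>x. u m x - u n x) < e)"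

lemma summable_norm_diff_imp_convergent:
  fixes a :: "nat \<Rightarrow> 'b::banach"
  assumes "summable (\<lambda>k. norm (a (Suc k) - a k))"
  shows "convergent a"
proof -
  have "(\<lambda>n. \<Sum>k<n. a (Suc k) - a k) \<longlonglongrightarrow> (\<Sum>k. a (Suc k) - a k)"
    using summable_LIMSEQ[OF summable_norm_cancel[OF assms]] .
  then have "(\<lambda>n. (a n - a 0) + a 0) \<longlonglongrightarrow> (\<Sum>k. a (Suc k) - a k) + a 0"
    by (intro tendsto_intros) (simp add: sum_lessThan_telescope)
  then show ?thesis by (auto simp: convergent_def)
qed

lemma convergent_if_summable_weighted_increments:
  fixes a :: "nat \<Rightarrow> 'b::banach"
  assumes "summable (\<lambda>k. 4^k * (norm (a (Suc k) - a k))\<^sup>2)"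
  shows "convergent a"
proof -
  have "(\<lambda>k. 4^k * (norm (a (Suc k) - a k))\<^sup>2) \<longlonglongrightarrow> 0"
    using assms by (rule summable_LIMSEQ_zero)
  then have "\<forall>\<^sub>F k in sequentially. 4^k * (norm (a (Suc k) - a k))\<^sup>2 < 1"
    by (rule order_tendstoD(2)) simp
  then have "\<forall>\<^sub>F k in sequentially. norm (norm (a (Suc k) - a k)) \<le> (1/2)^k"
  proof eventually_elim
    fix k assume "4^k * (norm (a (Suc k) - a k))\<^sup>2 < 1"
    then have "(norm (a (Suc k) - a k))\<^sup>2 \<le> 1 / 4^k"
      by (simp add: field_simps)
    also have "\<dots> = ((1/2)^k)\<^sup>2"
      by (simp add: power2_eq_square power_divide flip: power_mult_distrib)
    finally show "norm (norm (a (Suc k) - a k)) \<le> (1/2)^k"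
      by (auto intro: power2_le_imp_le)
  qed
  then have "summable (\<lambda>k. norm (a (Suc k) - a k))"
    by (rule summable_comparison_test_ev) (simp add: summable_geometric)
  then show ?thesis
    by (rule summable_norm_diff_imp_convergent)
qed

text \<open>The weights $4^k$ still leave $\sum_k 4^k \lVert u_{k+1}(x) - u_k(x)\rVert^2$ integrable,
  hence finite almost everywhere.\<close>

lemma AE_convergent_if_l2norm_diff_le:
  fixes u :: "nat \<Rightarrow> 'a \<Rightarrow> complex^'r^'s"
  assumes u: "\<And>k. u k \<in> L2m M"
    and fast: "\<And>k. l2norm M (\<lambda>x. u (Suc k) x - u k x) \<le> (1/4)^k"
  shows "AE x in M. convergent (\<lambda>k. u k x)"
proof -
  have [measurable]: "\<And>k. u k \<in> borel_measurable M" using u by (auto dest: L2mD)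
  define D where "D k x = norm (u (Suc k) x - u k x)" for k x
  have [measurable]: "(\<lambda>x. D k x) \<in> borel_measurable M" for k unfolding D_def by measurable
  have intD: "integrable M (\<lambda>x. (D k x)\<^sup>2)" for k
    unfolding D_def using L2m_diff[OF u u] by (auto dest: L2mD)
  have intD_le: "(\<integral>x. (D k x)\<^sup>2 \<partial>M) \<le> (1/16)^k" for k
  proof -
    have "(\<integral>x. (D k x)\<^sup>2 \<partial>M) = (l2norm M (\<lambda>x. u (Suc k) x - u k x))\<^sup>2"
      by (simp add: l2norm_squared D_def)
    also have "\<dots> \<le> ((1/4)^k)\<^sup>2"
      by (rule power_mono[OF fast l2norm_nonneg])
    also have "\<dots> = (1/16)^k"
      by (simp add: power2_eq_square flip: power_mult_distrib)
    finally show ?thesis .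
  qed
  define G where "G x = (\<Sum>k. ennreal (4^k * (D k x)\<^sup>2))" for x
  have "(\<integral>\<^sup>+x. G x \<partial>M) = (\<Sum>k. ennreal (4^k * (\<integral>x. (D k x)\<^sup>2 \<partial>M)))"
    unfolding G_def using intD by (subst nn_integral_suminf) (auto simp: nn_integral_eq_integral)
  also have "\<dots> \<le> (\<Sum>k. ennreal ((1/4)^k))"
  proof (intro suminf_le summableI ennreal_leI)
    fix k
    have "4^k * (\<integral>x. (D k x)\<^sup>2 \<partial>M) \<le> 4^k * (1/16::real)^k"
      using intD_le[of k] by (intro mult_left_mono) auto
    also have "\<dots> = (1/4)^k" by (simp flip: power_mult_distrib)
    finally show "4^k * (\<integral>x. (D k x)\<^sup>2 \<partial>M) \<le> (1/4)^k" .
  qed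
  also have "\<dots> = ennreal (4/3)"
    using geometric_sums[of "1/4::real"] by (intro suminf_ennreal_eq) auto
  finally have "(\<integral>\<^sup>+x. G x \<partial>M) < \<infinity>"
    by (simp add: le_less_trans)
  moreover have "G \<in> borel_measurable M"
    unfolding G_def by measurable
  ultimately have "AE x in M. G x < \<infinity>"
    by (intro finite_nn_integral_imp_ae_finite)
  then show ?thesis
  proof eventually_elim
    fix x assume "G x < \<infinity>"
    then have "summable (\<lambda>k. 4^k * (norm (u (Suc k) x - u k x))\<^sup>2)"
      by (intro summable_suminf_not_top) (auto simp: G_def D_def)
    then show "convergent (\<lambda>k. u k x)"
      by (rule convergent_if_summable_weighted_increments)
  qed
qed

text \<open>Fatou's lemma, applied to $\lVert w - u_j\rVert^2$.\<close>

lemma nn_integral_norm_diff_squared_le_if_AE_tendsto: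
  assumes w: "w \<in> L2m M" and u: "\<And>j. u j \<in> L2m M"
    and lim: "AE x in M. (\<lambda>j. u j x) \<longlonglongrightarrow> v x"
    and bound: "\<forall>\<^sub>F j in sequentially. l2norm M (\<lambda>x. w x - u j x) \<le> c"
  shows "(\<integral>\<^sup>+x. ennreal ((norm (w x - v x))\<^sup>2) \<partial>M) \<le> ennreal (c\<^sup>2)"
proof -
  have [measurable]: "w \<in> borel_measurable M" "\<And>j. u j \<in> borel_measurable M"
    using w u by (auto dest: L2mD)
  have "(\<integral>\<^sup>+x. ennreal ((norm (w x - v x))\<^sup>2) \<partial>M)
      = (\<integral>\<^sup>+x. liminf (\<lambda>j. ennreal ((norm (w x - u j x))\<^sup>2)) \<partial>M)"
  proof (rule nn_integral_cong_AE)
    show "AE x in M. ennreal ((norm (w x - v x))\<^sup>2) = liminf (\<lambda>j. ennreal ((norm (w x - u j x))\<^sup>2))"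
      using lim
    proof eventually_elim
      fix x assume "(\<lambda>j. u j x) \<longlonglongrightarrow> v x"
      then have "(\<lambda>j. ennreal ((norm (w x - u j x))\<^sup>2)) \<longlonglongrightarrow> ennreal ((norm (w x - v x))\<^sup>2)"
        by (intro tendsto_intros)
      then show "ennreal ((norm (w x - v x))\<^sup>2) = liminf (\<lambda>j. ennreal ((norm (w x - u j x))\<^sup>2))"
        by (rule lim_imp_Liminf[OF trivial_limit_sequentially, symmetric])
    qed
  qed
  also have "\<dots> \<le> liminf (\<lambda>j. \<integral>\<^sup>+x. ennreal ((norm (w x - u j x))\<^sup>2) \<partial>M)"
    by (rule nn_integral_liminf) measurable
  also have "\<dots> \<le> limsup (\<lambda>j. \<integral>\<^sup>+x. ennreal ((norm (w x - u j x))\<^sup>2) \<partial>M)"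
    by (rule Liminf_le_Limsup[OF trivial_limit_sequentially])
  also have "\<dots> \<le> ennreal (c\<^sup>2)"
    using bound
  proof (rule Limsup_bounded[OF eventually_mono])
    fix j assume "l2norm M (\<lambda>x. w x - u j x) \<le> c"
    then have "(\<integral>x. (norm (w x - u j x))\<^sup>2 \<partial>M) \<le> c\<^sup>2"
      unfolding l2norm_squared[symmetric] by (rule power_mono[OF _ l2norm_nonneg])
    then show "(\<integral>\<^sup>+x. ennreal ((norm (w x - u j x))\<^sup>2) \<partial>M) \<le> ennreal (c\<^sup>2)"
      using L2m_diff[OF w u] by (subst nn_integral_eq_integral) (auto dest: L2mD intro: ennreal_leI)
  qed
  finally show ?thesis .
qed

lemma l2norm_diff_le_if_AE_tendsto:
  assumes w: "w \<in> L2m M" and u: "\<And>j. u j \<in> L2m M" and v: "v \<in> borel_measurable M"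
    and lim: "AE x in M. (\<lambda>j. u j x) \<longlonglongrightarrow> v x"
    and bound: "\<forall>\<^sub>F j in sequentially. l2norm M (\<lambda>x. w x - u j x) \<le> c"
  shows "(\<lambda>x. w x - v x) \<in> L2m M \<and> l2norm M (\<lambda>x. w x - v x) \<le> c"
proof -
  have [measurable]: "w \<in> borel_measurable M" using w by (auto dest: L2mD)
  have fin: "(\<integral>\<^sup>+x. ennreal ((norm (w x - v x))\<^sup>2) \<partial>M) \<le> ennreal (c\<^sup>2)"
    by (rule nn_integral_norm_diff_squared_le_if_AE_tendsto[OF w u lim bound])
  obtain j where "l2norm M (\<lambda>x. w x - u j x) \<le> c"
    using bound by (auto simp: eventually_sequentially)
  then have c: "0 \<le> c"
    using l2norm_nonneg order_trans by blast
  have int: "integrable M (\<lambda>x. (norm (w x - v x))\<^sup>2)"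
  proof (rule integrableI_bounded)
    show "(\<lambda>x. (norm (w x - v x))\<^sup>2) \<in> borel_measurable M" using v by measurable
    show "(\<integral>\<^sup>+x. ennreal (norm ((norm (w x - v x))\<^sup>2)) \<partial>M) < \<infinity>"
      using fin by (simp add: le_less_trans)
  qed
  have "ennreal ((l2norm M (\<lambda>x. w x - v x))\<^sup>2) \<le> ennreal (c\<^sup>2)"
    using fin int by (simp add: l2norm_squared nn_integral_eq_integral)
  then have "(l2norm M (\<lambda>x. w x - v x))\<^sup>2 \<le> c\<^sup>2"
    by (simp add: ennreal_le_iff)
  then have "l2norm M (\<lambda>x. w x - v x) \<le> c"
    using c by (rule power2_le_imp_le)
  moreover have "(\<lambda>x. w x - v x) \<in> L2m M"
    using int v by (intro L2mI) measurable
  ultimately show ?thesis by blast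
qed

lemma l2_Cauchy_fast_subseq:
  assumes "l2_Cauchy M u"
  obtains r where "mono r" "\<And>k m n. r k \<le> m \<Longrightarrow> r k \<le> n \<Longrightarrow> l2norm M (\<lambda>x. u m x - u n x) < (1/4)^k"
proof -
  have "\<forall>k. \<exists>N. \<forall>m\<ge>N. \<forall>n\<ge>N. l2norm M (\<lambda>x. u m x - u n x) < (1/4)^k"
    using assms by (simp add: l2_Cauchy_def)
  then obtain N where N: "\<And>k m n. m \<ge> N k \<Longrightarrow> n \<ge> N k \<Longrightarrow> l2norm M (\<lambda>x. u m x - u n x) < (1/4)^k"
    by metis
  have "mono (\<lambda>k. \<Sum>j\<le>k. N j)"
    by (intro monoI sum_mono2) auto
  moreover have "N k \<le> (\<Sum>j\<le>k. N j)" for k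
    by (intro member_le_sum) auto
  ultimately show ?thesis
    by (intro that[of "\<lambda>k. \<Sum>j\<le>k. N j"] N) (auto intro: order_trans)
qed

lemma L2m_complete:
  fixes u :: "nat \<Rightarrow> 'a \<Rightarrow> complex^'r^'s"
  assumes u: "\<And>n. u n \<in> L2m M" and "l2_Cauchy M u"
  shows "\<exists>v\<in>L2m M. l2_tendsto M u v"
proof -
  obtain r where "mono r"
    and r: "\<And>k m n. r k \<le> m \<Longrightarrow> r k \<le> n \<Longrightarrow> l2norm M (\<lambda>x. u m x - u n x) < (1/4)^k"
    using l2_Cauchy_fast_subseq[OF \<open>l2_Cauchy M u\<close>] by blast
  have r_le: "k \<le> j \<Longrightarrow> r k \<le> r j" for k j
    using \<open>mono r\<close> by (rule monoD)
  have fast: "l2norm M (\<lambda>x. u (r (Suc k)) x - u (r k) x) \<le> (1/4)^k" for k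
    using r[OF r_le order_refl, of k "Suc k"] by simp
  define v where "v x = lim (\<lambda>k. u (r k) x)" for x
  have [measurable]: "\<And>n. u n \<in> borel_measurable M" using u by (auto dest: L2mD)
  have v_meas: "v \<in> borel_measurable M" unfolding v_def by measurable
  have v_lim: "AE x in M. (\<lambda>k. u (r k) x) \<longlonglongrightarrow> v x"
    using AE_convergent_if_l2norm_diff_le[OF u fast]
    by eventually_elim (simp add: v_def convergent_LIMSEQ_iff)
  have close: "(\<lambda>x. u (r k) x - v x) \<in> L2m M \<and> l2norm M (\<lambda>x. u (r k) x - v x) \<le> (1/4)^k" for k
  proof (rule l2norm_diff_le_if_AE_tendsto[OF u u v_meas v_lim])
    show "\<forall>\<^sub>F j in sequentially. l2norm M (\<lambda>x. u (r k) x - u (r j) x) \<le> (1/4)^k"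
      using eventually_ge_at_top[of k] by eventually_elim (use r r_le in \<open>auto intro: less_imp_le\<close>)
  qed
  have v: "v \<in> L2m M"
    using L2m_diff[OF u conjunct1[OF close], of "r 0" 0] by simp
  have "l2_tendsto M u v"
    unfolding l2_tendsto_def
  proof (rule LIMSEQ_I)
    fix e :: real assume "e > 0"
    then obtain k where k: "(1/4::real)^k < e/2"
      using real_arch_pow_inv[of "e/2" "1/4"] by auto
    have "l2norm M (\<lambda>x. u n x - v x) < e" if "n \<ge> r k" for n
    proof -
      have "l2norm M (\<lambda>x. u n x - v x)
          \<le> l2norm M (\<lambda>x. u n x - u (r k) x) + l2norm M (\<lambda>x. u (r k) x - v x)"
        by (rule l2norm_triangle[OF u u v])
      also have "\<dots> < (1/4)^k + (1/4)^k"
        using r[OF that order_refl] close[of k] by linarith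
      finally show ?thesis using k by simp
    qed
    then show "\<exists>no. \<forall>n\<ge>no. norm (l2norm M (\<lambda>x. u n x - v x) - 0) < e"
      by (auto simp: l2norm_nonneg)
  qed
  with v show ?thesis by blast
qed

lemma l2_tendsto_unique:
  assumes u: "\<And>n. u n \<in> L2m M" and a: "a \<in> L2m M" and b: "b \<in> L2m M"
    and "l2_tendsto M u a" "l2_tendsto M u b"
  shows "aeq M a b"
proof -
  have "(\<lambda>n. l2norm M (\<lambda>x. u n x - a x) + l2norm M (\<lambda>x. u n x - b x)) \<longlonglongrightarrow> 0"
    using tendsto_add[OF assms(4,5)[unfolded l2_tendsto_def]] by simp
  moreover have "\<forall>n. l2norm M (\<lambda>x. a x - b x)
      \<le> l2norm M (\<lambda>x. u n x - a x) + l2norm M (\<lambda>x. u n x - b x)"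
    using l2norm_triangle[OF a u b] l2norm_minus_commute[of M a] by simp
  ultimately have "l2norm M (\<lambda>x. a x - b x) \<le> 0"
    by (intro tendsto_lowerbound always_eventually) auto
  then show ?thesis
    unfolding aeq_iff_l2norm_diff[OF a b] using l2norm_nonneg[of M "\<lambda>x. a x - b x"] by linarith
qed

lemma l2_tendsto_if_le:
  assumes "\<forall>\<^sub>F n in sequentially. l2norm M (\<lambda>x. v n x - b x) \<le> e n" "e \<longlonglongrightarrow> 0"
  shows "l2_tendsto M v b"
proof -
  have "\<forall>\<^sub>F n in sequentially. 0 \<le> l2norm M (\<lambda>x. v n x - b x)"
    by (simp add: l2norm_nonneg)
  then show ?thesis
    unfolding l2_tendsto_def by (rule tendsto_sandwich[OF _ assms(1) tendsto_const assms(2)])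
qed

lemma l2_tendsto_le_mult:
  assumes "l2_tendsto M u a"
    and "\<And>n. l2norm M (\<lambda>x. v n x - b x) \<le> C * l2norm M (\<lambda>x. u n x - a x)"
  shows "l2_tendsto M v b"
  using always_eventually[OF allI[OF assms(2)]] by (rule l2_tendsto_if_le)
    (use tendsto_mult_right_zero assms(1) in \<open>unfold l2_tendsto_def, blast\<close>)

lemma l2_tendsto_aeq:
  assumes "\<And>n. u n \<in> L2m M" "\<And>n. v n \<in> L2m M" "a \<in> L2m M"
    and "\<And>n. aeq M (u n) (v n)" "l2_tendsto M u a"
  shows "l2_tendsto M v a"
proof (rule l2_tendsto_le_mult[OF assms(5), of _ _ 1])
  fix n
  show "l2norm M (\<lambda>x. v n x - a x) \<le> 1 * l2norm M (\<lambda>x. u n x - a x)"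
    using l2norm_cong[OF L2m_diff[OF assms(2,3)] L2m_diff[OF assms(1,3)]
        aeq_diff[OF aeq_sym[OF assms(4)] aeq_refl]] by simp
qed

lemma l2_tendsto_add:
  assumes "\<And>n. u n \<in> L2m M" "\<And>n. v n \<in> L2m M" "a \<in> L2m M" "b \<in> L2m M"
    and "l2_tendsto M u a" "l2_tendsto M v b"
  shows "l2_tendsto M (\<lambda>n x. u n x + v n x) (\<lambda>x. a x + b x)"
proof (rule l2_tendsto_if_le[OF always_eventually[OF allI]])
  show "l2norm M (\<lambda>x. u n x + v n x - (a x + b x))
      \<le> l2norm M (\<lambda>x. u n x - a x) + l2norm M (\<lambda>x. v n x - b x)" for n
    using l2norm_add_le[OF L2m_diff[OF assms(1,3)] L2m_diff[OF assms(2,4)]]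
    by (simp add: algebra_simps)
  show "(\<lambda>n. l2norm M (\<lambda>x. u n x - a x) + l2norm M (\<lambda>x. v n x - b x)) \<longlonglongrightarrow> 0"
    using tendsto_add[OF assms(5,6)[unfolded l2_tendsto_def]] by simp
qed

lemma l2_tendsto_cscale:
  assumes "l2_tendsto M u a"
  shows "l2_tendsto M (\<lambda>n x. cscale c (u n x)) (\<lambda>x. cscale c (a x))"
  by (rule l2_tendsto_le_mult[OF assms, where C="cmod c"])
    (simp add: l2norm_cscale flip: cscale_diff)

lemma l2_tendsto_sip:
  assumes u: "\<And>n. u n \<in> L2m M" and a: "a \<in> L2m M" and g: "g \<in> L2m M" and "l2_tendsto M u a"
  shows "(\<lambda>n. sip M (u n) g) \<longlonglongrightarrow> sip M a g"
proof -
  have "\<forall>n. norm (sip M (u n) g - sip M a g) \<le> l2norm M (\<lambda>x. u n x - a x) * l2norm M g"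
    using sip_cauchy_schwarz[OF L2m_diff[OF u a] g] by (simp add: sip_diff_left[OF u a g])
  moreover have "(\<lambda>n. l2norm M (\<lambda>x. u n x - a x) * l2norm M g) \<longlonglongrightarrow> 0"
    using tendsto_mult_left_zero \<open>l2_tendsto M u a\<close> unfolding l2_tendsto_def by blast
  ultimately have "(\<lambda>n. sip M (u n) g - sip M a g) \<longlonglongrightarrow> 0"
    by (rule Lim_null_comparison[OF always_eventually])
  then show ?thesis by (simp add: LIM_zero_iff)
qed

lemma l2_tendsto_l2norm:
  assumes u: "\<And>n. u n \<in> L2m M" and a: "a \<in> L2m M" and "l2_tendsto M u a"
  shows "(\<lambda>n. l2norm M (u n)) \<longlonglongrightarrow> l2norm M a"
proof -
  have "\<forall>n. norm (l2norm M (u n) - l2norm M a) \<le> l2norm M (\<lambda>x. u n x - a x)"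
  proof
    fix n
    have "l2norm M (u n) \<le> l2norm M (\<lambda>x. u n x - a x) + l2norm M a"
      using l2norm_add_le[OF L2m_diff[OF u a] a] by simp
    moreover have "l2norm M a \<le> l2norm M (\<lambda>x. u n x - a x) + l2norm M (u n)"
      using l2norm_add_le[OF L2m_diff[OF a u[of n]] u[of n]]
      by (simp add: l2norm_minus_commute[of M a])
    ultimately show "norm (l2norm M (u n) - l2norm M a) \<le> l2norm M (\<lambda>x. u n x - a x)"
      by simp
  qed
  then have "(\<lambda>n. l2norm M (u n) - l2norm M a) \<longlonglongrightarrow> 0"
    using \<open>l2_tendsto M u a\<close> unfolding l2_tendsto_def
    by (rule Lim_null_comparison[OF always_eventually])
  then show ?thesis by (simp add: LIM_zero_iff)
qed

definition l2_lim :: "'a measure \<Rightarrow> (nat \<Rightarrow> 'a \<Rightarrow> complex^'r^'s) \<Rightarrow> 'a \<Rightarrow> complex^'r^'s"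
  where "l2_lim M u = (SOME v. v \<in> L2m M \<and> l2_tendsto M u v)"

lemma l2_lim:
  assumes "\<And>n. u n \<in> L2m M" "l2_Cauchy M u"
  shows "l2_lim M u \<in> L2m M" "l2_tendsto M u (l2_lim M u)"
  using someI_ex[OF L2m_complete[OF assms, unfolded Bex_def]] unfolding l2_lim_def by auto

lemma bounded_linear_op_L2m: "bounded_linear_op M U \<Longrightarrow> f \<in> L2m M \<Longrightarrow> U f \<in> L2m M"
  by (simp add: bounded_linear_op_def)

lemma bounded_linear_op_aeq:
  "bounded_linear_op M U \<Longrightarrow> f \<in> L2m M \<Longrightarrow> g \<in> L2m M \<Longrightarrow> aeq M f g \<Longrightarrow> aeq M (U f) (U g)"
  by (simp add: bounded_linear_op_def)

lemma bounded_linear_op_linear: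
  "bounded_linear_op M U \<Longrightarrow> f \<in> L2m M \<Longrightarrow> g \<in> L2m M \<Longrightarrow>
    aeq M (U (\<lambda>x. cscale a (f x) + cscale b (g x))) (\<lambda>x. cscale a (U f x) + cscale b (U g x))"
  by (simp add: bounded_linear_op_def)

lemma bounded_linear_op_bound:
  assumes "bounded_linear_op M U"
  obtains C where "C > 0" "\<And>f. f \<in> L2m M \<Longrightarrow> l2norm M (U f) \<le> C * l2norm M f"
proof -
  obtain C where C: "\<forall>f\<in>L2m M. l2norm M (U f) \<le> C * l2norm M f"
    using assms by (auto simp: bounded_linear_op_def)
  have "l2norm M (U f) \<le> max C 1 * l2norm M f" if "f \<in> L2m M" for f
    using C that order_trans[OF _ mult_right_mono[OF max.cobounded1 l2norm_nonneg]] by blast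
  then show ?thesis by (intro that[of "max C 1"]) auto
qed

lemma bounded_linear_op_add:
  "bounded_linear_op M U \<Longrightarrow> f \<in> L2m M \<Longrightarrow> g \<in> L2m M \<Longrightarrow>
    aeq M (U (\<lambda>x. f x + g x)) (\<lambda>x. U f x + U g x)"
  using bounded_linear_op_linear[of M U f g 1 1] by simp

lemma bounded_linear_op_cscale:
  "bounded_linear_op M U \<Longrightarrow> f \<in> L2m M \<Longrightarrow> aeq M (U (\<lambda>x. cscale c (f x))) (\<lambda>x. cscale c (U f x))"
  using bounded_linear_op_linear[of M U f f c 0] by simp

lemma bounded_linear_op_diff:
  "bounded_linear_op M U \<Longrightarrow> f \<in> L2m M \<Longrightarrow> g \<in> L2m M \<Longrightarrow>
    aeq M (U (\<lambda>x. f x - g x)) (\<lambda>x. U f x - U g x)"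
  using bounded_linear_op_linear[of M U f g 1 "-1"] by (simp add: cscale_minus_one)

lemma bounded_linear_op_sum:
  assumes U: "bounded_linear_op M U" and "finite I" and F: "\<And>i. i \<in> I \<Longrightarrow> F i \<in> L2m M"
  shows "aeq M (U (\<lambda>x. \<Sum>i\<in>I. cscale (c i) (F i x))) (\<lambda>x. \<Sum>i\<in>I. cscale (c i) (U (F i) x))"
  using \<open>finite I\<close> F
proof (induction I rule: finite_induct)
  case empty
  then show ?case using bounded_linear_op_cscale[OF U L2m_zero, of 0] by simp
next
  case (insert a A)
  have L2: "(\<lambda>x. cscale (c a) (F a x)) \<in> L2m M" "(\<lambda>x. \<Sum>i\<in>A. cscale (c i) (F i x)) \<in> L2m M"
    using insert.prems by (auto intro!: L2m_cscale L2m_sum)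
  have "aeq M (U (\<lambda>x. \<Sum>i\<in>insert a A. cscale (c i) (F i x)))
      (\<lambda>x. U (\<lambda>x. cscale (c a) (F a x)) x + U (\<lambda>x. \<Sum>i\<in>A. cscale (c i) (F i x)) x)"
    using bounded_linear_op_add[OF U L2] insert.hyps by simp
  also have "aeq M \<dots> (\<lambda>x. cscale (c a) (U (F a) x) + (\<Sum>i\<in>A. cscale (c i) (U (F i) x)))"
    using insert by (intro aeq_add bounded_linear_op_cscale[OF U]) auto
  finally show ?case using insert.hyps by simp
qed

lemma l2norm_bounded_linear_op_diff:
  assumes U: "bounded_linear_op M U" and C: "\<And>h. h \<in> L2m M \<Longrightarrow> l2norm M (U h) \<le> C * l2norm M h"
    and f: "f \<in> L2m M" and g: "g \<in> L2m M"
  shows "l2norm M (\<lambda>x. U f x - U g x) \<le> C * l2norm M (\<lambda>x. f x - g x)"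
proof -
  have Uf: "U f \<in> L2m M" and Ug: "U g \<in> L2m M" and Ufg: "U (\<lambda>x. f x - g x) \<in> L2m M"
    using U f g L2m_diff[OF f g] by (simp_all add: bounded_linear_op_L2m)
  have "l2norm M (\<lambda>x. U f x - U g x) = l2norm M (U (\<lambda>x. f x - g x))"
    by (rule l2norm_cong[OF L2m_diff[OF Uf Ug] Ufg aeq_sym[OF bounded_linear_op_diff[OF U f g]]])
  also have "\<dots> \<le> C * l2norm M (\<lambda>x. f x - g x)"
    using C L2m_diff[OF f g] .
  finally show ?thesis .
qed

lemma l2_tendsto_bounded_linear_op:
  assumes U: "bounded_linear_op M U" and "\<And>n. u n \<in> L2m M" "a \<in> L2m M" "l2_tendsto M u a"
  shows "l2_tendsto M (\<lambda>n. U (u n)) (U a)"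
proof -
  obtain C where "\<And>h. h \<in> L2m M \<Longrightarrow> l2norm M (U h) \<le> C * l2norm M h"
    using bounded_linear_op_bound[OF U] by blast
  then show ?thesis
    using assms by (intro l2_tendsto_le_mult[OF assms(4)] l2norm_bounded_linear_op_diff[OF U])
qed

lemma bounded_linear_opI:
  fixes U :: "('a \<Rightarrow> complex^'r::finite^'s::finite) \<Rightarrow> ('a \<Rightarrow> complex^'r^'s)"
  assumes "\<And>f. f \<in> L2m M \<Longrightarrow> U f \<in> L2m M"
    and "\<And>f g. f \<in> L2m M \<Longrightarrow> g \<in> L2m M \<Longrightarrow> aeq M f g \<Longrightarrow> aeq M (U f) (U g)"
    and "\<And>f g a b. f \<in> L2m M \<Longrightarrow> g \<in> L2m M \<Longrightarrow>
      aeq M (U (\<lambda>x. cscale a (f x) + cscale b (g x))) (\<lambda>x. cscale a (U f x) + cscale b (U g x))"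
    and "\<And>f. f \<in> L2m M \<Longrightarrow> l2norm M (U f) \<le> C * l2norm M f"
  shows "bounded_linear_op M U"
  unfolding bounded_linear_op_def
  by (intro conjI ballI allI impI exI[of _ C]) (fact assms)+

lemma bounded_linear_op_id: "bounded_linear_op M (\<lambda>f. f)"
  by (rule bounded_linear_opI[where C=1]) (simp_all add: aeq_refl)

lemma bounded_linear_op_comp:
  fixes U V :: "('a \<Rightarrow> complex^'r::finite^'s::finite) \<Rightarrow> ('a \<Rightarrow> complex^'r^'s)"
  assumes U: "bounded_linear_op M U" and V: "bounded_linear_op M V"
  shows "bounded_linear_op M (\<lambda>f. U (V f))"
proof -
  obtain C1 where C1: "C1 > 0" "\<And>f. f \<in> L2m M \<Longrightarrow> l2norm M (U f) \<le> C1 * l2norm M f"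
    using bounded_linear_op_bound[OF U] by blast
  obtain C2 where C2: "\<And>f. f \<in> L2m M \<Longrightarrow> l2norm M (V f) \<le> C2 * l2norm M f"
    using bounded_linear_op_bound[OF V] by blast
  show ?thesis
  proof (rule bounded_linear_opI)
    fix f g :: "'a \<Rightarrow> complex^'r^'s" and a b assume f: "f \<in> L2m M" and g: "g \<in> L2m M"
    have Vf: "V f \<in> L2m M" and Vg: "V g \<in> L2m M"
      using V f g by (simp_all add: bounded_linear_op_L2m)
    show "U (V f) \<in> L2m M" using U Vf by (rule bounded_linear_op_L2m)
    show "aeq M (U (V f)) (U (V g))" if "aeq M f g"
      by (rule bounded_linear_op_aeq[OF U Vf Vg bounded_linear_op_aeq[OF V f g that]])
    have "aeq M (U (V (\<lambda>x. cscale a (f x) + cscale b (g x))))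
        (U (\<lambda>x. cscale a (V f x) + cscale b (V g x)))"
      using V f g Vf Vg
      by (intro bounded_linear_op_aeq[OF U] bounded_linear_op_linear bounded_linear_op_L2m[OF V]
          L2m_add L2m_cscale)
    also have "aeq M \<dots> (\<lambda>x. cscale a (U (V f) x) + cscale b (U (V g) x))"
      by (rule bounded_linear_op_linear[OF U Vf Vg])
    finally show "aeq M (U (V (\<lambda>x. cscale a (f x) + cscale b (g x))))
        (\<lambda>x. cscale a (U (V f) x) + cscale b (U (V g) x))" .
    show "l2norm M (U (V f)) \<le> (C1 * C2) * l2norm M f"
      using C1(2)[OF Vf] mult_left_mono[OF C2[OF f] less_imp_le[OF C1(1)]]
      by (simp add: mult.assoc)
  qed
qed

lemma bounded_linear_op_add_op:
  fixes U V :: "('a \<Rightarrow> complex^'r::finite^'s::finite) \<Rightarrow> ('a \<Rightarrow> complex^'r^'s)"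
  assumes U: "bounded_linear_op M U" and V: "bounded_linear_op M V"
  shows "bounded_linear_op M (\<lambda>f x. U f x + V f x)"
proof -
  obtain C1 where C1: "\<And>f. f \<in> L2m M \<Longrightarrow> l2norm M (U f) \<le> C1 * l2norm M f"
    using bounded_linear_op_bound[OF U] by blast
  obtain C2 where C2: "\<And>f. f \<in> L2m M \<Longrightarrow> l2norm M (V f) \<le> C2 * l2norm M f"
    using bounded_linear_op_bound[OF V] by blast
  show ?thesis
  proof (rule bounded_linear_opI)
    fix f g :: "'a \<Rightarrow> complex^'r^'s" and a b assume f: "f \<in> L2m M" and g: "g \<in> L2m M"
    show "(\<lambda>x. U f x + V f x) \<in> L2m M"
      by (rule L2m_add[OF bounded_linear_op_L2m[OF U f] bounded_linear_op_L2m[OF V f]])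
    show "aeq M (\<lambda>x. U f x + V f x) (\<lambda>x. U g x + V g x)" if "aeq M f g"
      by (rule aeq_add[OF bounded_linear_op_aeq[OF U f g that]
            bounded_linear_op_aeq[OF V f g that]])
    have "aeq M (\<lambda>x. U (\<lambda>x. cscale a (f x) + cscale b (g x)) x
          + V (\<lambda>x. cscale a (f x) + cscale b (g x)) x)
        (\<lambda>x. (cscale a (U f x) + cscale b (U g x)) + (cscale a (V f x) + cscale b (V g x)))"
      by (rule aeq_add[OF bounded_linear_op_linear[OF U f g] bounded_linear_op_linear[OF V f g]])
    also have "(\<lambda>x. (cscale a (U f x) + cscale b (U g x)) + (cscale a (V f x) + cscale b (V g x)))
        = (\<lambda>x. cscale a (U f x + V f x) + cscale b (U g x + V g x))"
      by (simp add: cscale_add algebra_simps)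
    finally show "aeq M (\<lambda>x. U (\<lambda>x. cscale a (f x) + cscale b (g x)) x
          + V (\<lambda>x. cscale a (f x) + cscale b (g x)) x)
        (\<lambda>x. cscale a (U f x + V f x) + cscale b (U g x + V g x))" .
    show "l2norm M (\<lambda>x. U f x + V f x) \<le> (C1 + C2) * l2norm M f"
      using l2norm_add_le[OF bounded_linear_op_L2m[OF U f] bounded_linear_op_L2m[OF V f]]
        C1[OF f] C2[OF f]
      by (simp add: algebra_simps)
  qed
qed

lemma bounded_linear_op_lmult:
  fixes X :: "complex^'s::finite^'s" and M :: "'a measure"
  shows "bounded_linear_op M (\<lambda>f x. X ** (f x :: complex^'r::finite^'s))"
proof -
  obtain K where K: "\<And>f::'a \<Rightarrow> complex^'r^'s. f \<in> L2m M \<Longrightarrow> l2norm M (\<lambda>x. X ** f x) \<le> K * l2norm M f"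
    using l2norm_lmult_le by blast
  show ?thesis
    by (rule bounded_linear_opI[OF L2m_lmult aeq_lmult _ K])
      (simp_all add: aeq_refl matrix_add_ldistrib matrix_mult_cscale)
qed

lemma bounded_linear_op_cscale_op:
  "bounded_linear_op M U \<Longrightarrow> bounded_linear_op M (\<lambda>f x. cscale c (U f x))"
  using bounded_linear_op_comp[OF bounded_linear_op_lmult, of M U "mat c"]
  by (simp add: cscale_eq_mat_mult)

lemma bounded_linear_op_diff_op:
  assumes "bounded_linear_op M U" "bounded_linear_op M V"
  shows "bounded_linear_op M (\<lambda>f x. U f x - V f x)"
  using bounded_linear_op_add_op[OF assms(1) bounded_linear_op_cscale_op[OF assms(2), of "-1"]]
  by (simp add: cscale_minus_one)

lemma bounded_linear_op_sum_op:
  assumes "finite I" "\<And>i. i \<in> I \<Longrightarrow> bounded_linear_op M (U i)"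
  shows "bounded_linear_op M (\<lambda>f x. \<Sum>i\<in>I. cscale (c i) (U i f x))"
  using assms
proof (induction I rule: finite_induct)
  case empty
  then show ?case
    using bounded_linear_op_cscale_op[OF bounded_linear_op_id, of M 0] by simp
next
  case (insert a A)
  have "bounded_linear_op M (\<lambda>f x. cscale (c a) (U a f x))"
    using insert.prems by (intro bounded_linear_op_cscale_op) simp
  then show ?case
    using bounded_linear_op_add_op[OF _ insert.IH] insert by simp
qed

lemma bounded_linear_op_funpow:
  assumes "bounded_linear_op M S"
  shows "bounded_linear_op M (S ^^ n)"
proof (induction n)
  case 0
  then show ?case using bounded_linear_op_id by (simp add: id_def)
next
  case (Suc n)
  then show ?case using bounded_linear_op_comp[OF assms Suc.IH] by (simp add: comp_def)
qed

definition ops_commute :: "'a measure \<Rightarrow> (('a \<Rightarrow> complex^'r^'s) \<Rightarrow> ('a \<Rightarrow> complex^'r^'s))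
    \<Rightarrow> (('a \<Rightarrow> complex^'r^'s) \<Rightarrow> ('a \<Rightarrow> complex^'r^'s)) \<Rightarrow> bool"
  where "ops_commute M A B \<longleftrightarrow> (\<forall>f\<in>L2m M. aeq M (A (B f)) (B (A f)))"

lemma ops_commuteD: "ops_commute M A B \<Longrightarrow> f \<in> L2m M \<Longrightarrow> aeq M (A (B f)) (B (A f))"
  by (simp add: ops_commute_def)

lemma ops_commute_sym: "ops_commute M A B \<Longrightarrow> ops_commute M B A"
  by (simp add: ops_commute_def aeq_sym)

lemma ops_commute_funpow:
  fixes B S :: "('a \<Rightarrow> complex^'r::finite^'s::finite) \<Rightarrow> ('a \<Rightarrow> complex^'r^'s)"
  assumes B: "bounded_linear_op M B" and S: "bounded_linear_op M S" and BS: "ops_commute M B S"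
  shows "ops_commute M B (S ^^ n)"
  unfolding ops_commute_def
proof (induction n)
  case (Suc n)
  show ?case
  proof
    fix f :: "'a \<Rightarrow> complex^'r^'s" assume f: "f \<in> L2m M"
    have Sn: "(S ^^ n) f \<in> L2m M"
      using bounded_linear_op_funpow[OF S] f by (rule bounded_linear_op_L2m)
    have "aeq M (B (S ((S ^^ n) f))) (S (B ((S ^^ n) f)))"
      using BS Sn by (rule ops_commuteD)
    also have "aeq M \<dots> (S ((S ^^ n) (B f)))"
        using Suc f Sn bounded_linear_op_L2m[OF B Sn]
        bounded_linear_op_L2m[OF bounded_linear_op_funpow[OF S] bounded_linear_op_L2m[OF B f]]
      by (intro bounded_linear_op_aeq[OF S]) auto
    finally show "aeq M (B ((S ^^ Suc n) f)) ((S ^^ Suc n) (B f))" by simp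
  qed
qed (simp add: aeq_refl)

lemma ops_commute_sum:
  fixes B :: "('a \<Rightarrow> complex^'r::finite^'s::finite) \<Rightarrow> ('a \<Rightarrow> complex^'r^'s)"
  assumes B: "bounded_linear_op M B" and "finite I"
    and U: "\<And>i. i \<in> I \<Longrightarrow> bounded_linear_op M (U i)" and BU: "\<And>i. i \<in> I \<Longrightarrow> ops_commute M B (U i)"
  shows "ops_commute M B (\<lambda>f x. \<Sum>i\<in>I. cscale (c i) (U i f x))"
  unfolding ops_commute_def
proof
  fix f :: "'a \<Rightarrow> complex^'r^'s" assume f: "f \<in> L2m M"
  have "aeq M (B (\<lambda>x. \<Sum>i\<in>I. cscale (c i) (U i f x))) (\<lambda>x. \<Sum>i\<in>I. cscale (c i) (B (U i f) x))"
    using U f by (intro bounded_linear_op_sum[OF B \<open>finite I\<close>]) (simp add: bounded_linear_op_L2m)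
  also have "aeq M \<dots> (\<lambda>x. \<Sum>i\<in>I. cscale (c i) (U i (B f) x))"
    using BU f by (intro aeq_sum[OF \<open>finite I\<close>] aeq_cscale ops_commuteD)
  finally show "aeq M (B (\<lambda>x. \<Sum>i\<in>I. cscale (c i) (U i f x)))
      (\<lambda>x. \<Sum>i\<in>I. cscale (c i) (U i (B f) x))" .
qed

lemma ops_commute_cscale_op:
  fixes B U :: "('a \<Rightarrow> complex^'r::finite^'s::finite) \<Rightarrow> ('a \<Rightarrow> complex^'r^'s)"
  assumes B: "bounded_linear_op M B" and U: "bounded_linear_op M U" and BU: "ops_commute M B U"
  shows "ops_commute M B (\<lambda>f x. cscale c (U f x))"
  unfolding ops_commute_def
proof
  fix f :: "'a \<Rightarrow> complex^'r^'s" assume f: "f \<in> L2m M"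
  have "aeq M (B (\<lambda>x. cscale c (U f x))) (\<lambda>x. cscale c (B (U f) x))"
    by (rule bounded_linear_op_cscale[OF B bounded_linear_op_L2m[OF U f]])
  also have "aeq M \<dots> (\<lambda>x. cscale c (U (B f) x))"
    by (rule aeq_cscale[OF ops_commuteD[OF BU f]])
  finally show "aeq M (B (\<lambda>x. cscale c (U f x))) (\<lambda>x. cscale c (U (B f) x))" .
qed

lemma ops_commute_diff_op:
  fixes B U V :: "('a \<Rightarrow> complex^'r::finite^'s::finite) \<Rightarrow> ('a \<Rightarrow> complex^'r^'s)"
  assumes B: "bounded_linear_op M B" and U: "bounded_linear_op M U" and V: "bounded_linear_op M V"
    and BU: "ops_commute M B U" and BV: "ops_commute M B V"
  shows "ops_commute M B (\<lambda>f x. U f x - V f x)"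
  unfolding ops_commute_def
proof
  fix f :: "'a \<Rightarrow> complex^'r^'s" assume f: "f \<in> L2m M"
  have "aeq M (B (\<lambda>x. U f x - V f x)) (\<lambda>x. B (U f) x - B (V f) x)"
    by (rule bounded_linear_op_diff[OF B bounded_linear_op_L2m[OF U f]
          bounded_linear_op_L2m[OF V f]])
  also have "aeq M \<dots> (\<lambda>x. U (B f) x - V (B f) x)"
    by (rule aeq_diff[OF ops_commuteD[OF BU f] ops_commuteD[OF BV f]])
  finally show "aeq M (B (\<lambda>x. U f x - V f x)) (\<lambda>x. U (B f) x - V (B f) x)" .
qed

lemma positive_op_bounded: "positive_op M U \<Longrightarrow> bounded_linear_op M U"
  by (simp add: positive_op_def)

lemma positive_op_sym:
  "positive_op M U \<Longrightarrow> f \<in> L2m M \<Longrightarrow> g \<in> L2m M \<Longrightarrow> sip M (U f) g = sip M f (U g)"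
  by (simp add: positive_op_def)

lemma positive_op_nonneg: "positive_op M U \<Longrightarrow> f \<in> L2m M \<Longrightarrow> 0 \<le> Re (sip M (U f) f)"
  unfolding positive_op_def by blast

lemma positive_opI:
  assumes U: "bounded_linear_op M U"
    and sym: "\<And>f g. f \<in> L2m M \<Longrightarrow> g \<in> L2m M \<Longrightarrow> sip M (U f) g = sip M f (U g)"
    and nonneg: "\<And>f. f \<in> L2m M \<Longrightarrow> 0 \<le> Re (sip M (U f) f)"
  shows "positive_op M U"
proof -
  have "Im (sip M (U f) f) = 0" if f: "f \<in> L2m M" for f
  proof -
    have "sip M (U f) f = cnj (sip M (U f) f)"
      using sym[OF f f] sip_commute[OF f bounded_linear_op_L2m[OF U f]] by simp
    then show ?thesis by (simp add: complex_eq_iff)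
  qed
  then show ?thesis
    unfolding positive_op_def using U sym nonneg by blast
qed

lemma positive_op_cscale_op:
  fixes U :: "('a \<Rightarrow> complex^'r::finite^'s::finite) \<Rightarrow> ('a \<Rightarrow> complex^'r^'s)"
  assumes U: "positive_op M U" and "c \<ge> 0"
  shows "positive_op M (\<lambda>f x. cscale (of_real c) (U f x))"
proof (rule positive_opI)
  show "bounded_linear_op M (\<lambda>f x. cscale (of_real c) (U f x))"
    by (rule bounded_linear_op_cscale_op[OF positive_op_bounded[OF U]])
  fix f g :: "'a \<Rightarrow> complex^'r^'s" assume f: "f \<in> L2m M" and g: "g \<in> L2m M"
  show "sip M (\<lambda>x. cscale (of_real c) (U f x)) g = sip M f (\<lambda>x. cscale (of_real c) (U g x))"
    using f g positive_op_sym[OF U f g] bounded_linear_op_L2m[OF positive_op_bounded[OF U]]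
    by (simp add: sip_cscale_left sip_cscale_right)
  show "0 \<le> Re (sip M (\<lambda>x. cscale (of_real c) (U f x)) f)"
    using f positive_op_nonneg[OF U f] \<open>c \<ge> 0\<close> bounded_linear_op_L2m[OF positive_op_bounded[OF U]]
    by (simp add: sip_cscale_left)
qed

lemma square_le_mult_if_quadratic_nonneg:
  fixes a b c :: real
  assumes c: "c \<ge> 0" and q: "\<And>t. 0 \<le> a + 2 * b * t + c * t\<^sup>2"
  shows "b\<^sup>2 \<le> a * c"
proof (cases "c = 0")
  case True
  show ?thesis
  proof (cases "b = 0")
    case False
    have "0 \<le> a + 2 * b * (- (a + 1) / (2 * b)) + c * (- (a + 1) / (2 * b))\<^sup>2" by (rule q)
    then show ?thesis using False \<open>c = 0\<close> by (simp add: field_simps)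
  qed (use q[of 0] c in simp)
next
  case False
  then have "c > 0" using c by simp
  have "0 \<le> a + 2 * b * (- b / c) + c * (- b / c)\<^sup>2" by (rule q)
  also have "\<dots> = a - b\<^sup>2 / c" using \<open>c > 0\<close> by (simp add: field_simps power2_eq_square)
  finally show ?thesis using \<open>c > 0\<close> by (simp add: field_simps)
qed

lemma Re_sip_positive_op_add_cscale:
  fixes t :: real
  assumes U: "positive_op M U" and f: "f \<in> L2m M" and g: "g \<in> L2m M"
  defines "h \<equiv> \<lambda>x. f x + cscale (of_real t) (g x)"
  shows "Re (sip M (U h) h)
    = Re (sip M (U f) f) + 2 * t * Re (sip M (U f) g) + t\<^sup>2 * Re (sip M (U g) g)"
proof -
  have B: "bounded_linear_op M U" using U by (rule positive_op_bounded)
  have tg: "(\<lambda>x. cscale (of_real t) (g x)) \<in> L2m M" using g by (rule L2m_cscale)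
  have h: "h \<in> L2m M" unfolding h_def using f tg by (rule L2m_add)
  have Uf: "U f \<in> L2m M" and Ug: "U g \<in> L2m M"
    using B f g by (simp_all add: bounded_linear_op_L2m)
  have tUg: "(\<lambda>x. cscale (of_real t) (U g x)) \<in> L2m M" using Ug by (rule L2m_cscale)
  have "aeq M (U h) (\<lambda>x. U f x + U (\<lambda>x. cscale (of_real t) (g x)) x)"
    unfolding h_def using B f tg by (rule bounded_linear_op_add)
  also have "aeq M \<dots> (\<lambda>x. U f x + cscale (of_real t) (U g x))"
    by (rule aeq_add[OF aeq_refl bounded_linear_op_cscale[OF B g]])
  finally have "sip M (U h) h = sip M (\<lambda>x. U f x + cscale (of_real t) (U g x)) h"
    using B h Uf tUg by (intro sip_cong L2m_add aeq_refl) (simp_all add: bounded_linear_op_L2m)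
  also have "\<dots> = sip M (U f) f + of_real t * (sip M (U f) g + sip M (U g) f)
      + of_real t * of_real t * sip M (U g) g"
    unfolding h_def using f g tg Uf Ug tUg
    by (simp add: sip_add_left sip_add_right sip_cscale_left sip_cscale_right L2m_add algebra_simps)
  also have "sip M (U g) f = cnj (sip M (U f) g)"
    using positive_op_sym[OF U g f] sip_commute[OF Uf g] by simp
  finally show ?thesis
    by (simp add: power2_eq_square algebra_simps)
qed

lemma positive_op_cauchy_schwarz:
  assumes U: "positive_op M U" and f: "f \<in> L2m M" and g: "g \<in> L2m M"
  shows "(cmod (sip M (U f) g))\<^sup>2 \<le> Re (sip M (U f) f) * Re (sip M (U g) g)"
proof -
  have B: "bounded_linear_op M U" using U by (rule positive_op_bounded)
  define s where "s = sip M (U f) g"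
  define w where "w = (if s = 0 then 1 else s / of_real (cmod s))"
  define g' where "g' = (\<lambda>x. cscale w (g x))"
  have g': "g' \<in> L2m M" unfolding g'_def using g by (rule L2m_cscale)
  have Uf: "U f \<in> L2m M" and Ug: "U g \<in> L2m M"
    using B f g by (simp_all add: bounded_linear_op_L2m)
  have "cmod w = 1" by (simp add: w_def norm_divide)
  then have ww: "w * cnj w = 1" using complex_norm_square[of w] by simp
  have "cnj w * s = of_real (cmod s)"
  proof (cases "s = 0")
    case False
    have "cnj s * s = of_real ((cmod s)\<^sup>2)"
      using complex_norm_square[of s] by (simp add: mult.commute)
    then show ?thesis using False by (simp add: w_def power2_eq_square)
  qed (simp add: w_def)
  then have fg': "Re (sip M (U f) g') = cmod s"
    unfolding g'_def using Uf g by (simp add: sip_cscale_right s_def[symmetric])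
  have g'g': "sip M (U g') g' = sip M (U g) g"
  proof -
    have "sip M (U g') g' = sip M (\<lambda>x. cscale w (U g x)) g'"
      unfolding g'_def
      using g Ug by (intro sip_cong L2m_cscale bounded_linear_op_cscale[OF B] aeq_refl)
        (simp_all add: bounded_linear_op_L2m[OF B] L2m_cscale)
    also have "\<dots> = w * cnj w * sip M (U g) g"
      unfolding g'_def using Ug g by (simp add: sip_cscale_left sip_cscale_right L2m_cscale)
    finally show ?thesis using ww by simp
  qed
  have "(cmod s)\<^sup>2 \<le> Re (sip M (U f) f) * Re (sip M (U g) g)"
  proof (rule square_le_mult_if_quadratic_nonneg[OF positive_op_nonneg[OF U g]])
    fix t
    have "0 \<le> Re (sip M (U (\<lambda>x. f x + cscale (of_real t) (g' x)))
        (\<lambda>x. f x + cscale (of_real t) (g' x)))"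
      by (rule positive_op_nonneg[OF U L2m_add[OF f L2m_cscale[OF g']]])
    then show "0 \<le> Re (sip M (U f) f) + 2 * cmod s * t + Re (sip M (U g) g) * t\<^sup>2"
      using Re_sip_positive_op_add_cscale[OF U f g', of t] fg' g'g' by (simp add: algebra_simps)
  qed
  then show ?thesis by (simp add: s_def)
qed

lemma positive_op_aeq_0_if_form_0:
  assumes U: "positive_op M U" and h: "h \<in> L2m M" and z: "Re (sip M (U h) h) = 0"
  shows "aeq M (U h) (\<lambda>x. 0)"
proof -
  have Uh: "U h \<in> L2m M" by (rule bounded_linear_op_L2m[OF positive_op_bounded[OF U] h])
  have "(cmod (sip M (U h) (U h)))\<^sup>2 \<le> 0"
    using positive_op_cauchy_schwarz[OF U h Uh] z by simp
  then have "l2norm M (U h) = 0"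
    using sip_self[OF Uh] by (simp del: of_real_power)
  then show ?thesis using l2norm_eq_0_iff[OF Uh] by simp
qed

lemma l2norm_positive_op_squared_le:
  assumes T: "positive_op M T" and "C \<ge> 0"
    and C: "\<And>h. h \<in> L2m M \<Longrightarrow> l2norm M (T h) \<le> C * l2norm M h"
    and f: "f \<in> L2m M"
  shows "(l2norm M (T f))\<^sup>2 \<le> C * Re (sip M (T f) f)"
proof -
  define n where "n = l2norm M (T f)"
  define p where "p = Re (sip M (T f) f)"
  have Tf: "T f \<in> L2m M" by (rule bounded_linear_op_L2m[OF positive_op_bounded[OF T] f])
  have TTf: "T (T f) \<in> L2m M" by (rule bounded_linear_op_L2m[OF positive_op_bounded[OF T] Tf])
  have "(n\<^sup>2)\<^sup>2 = (cmod (sip M (T f) (T f)))\<^sup>2"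
    using sip_self[OF Tf] by (simp add: n_def del: of_real_power)
  also have "\<dots> \<le> p * Re (sip M (T (T f)) (T f))"
    unfolding p_def by (rule positive_op_cauchy_schwarz[OF T f Tf])
  also have "\<dots> \<le> p * (C * n\<^sup>2)"
  proof (rule mult_left_mono)
    have "Re (sip M (T (T f)) (T f)) \<le> l2norm M (T (T f)) * n"
      using complex_Re_le_cmod sip_cauchy_schwarz[OF TTf Tf] unfolding n_def by (rule order_trans)
    also have "\<dots> \<le> C * n\<^sup>2"
      using mult_right_mono[OF C[OF Tf] l2norm_nonneg[of M "T f"]]
      by (simp add: n_def power2_eq_square)
    finally show "Re (sip M (T (T f)) (T f)) \<le> C * n\<^sup>2" .
    show "0 \<le> p" unfolding p_def by (rule positive_op_nonneg[OF T f])
  qed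
  finally have le: "n\<^sup>2 * n\<^sup>2 \<le> (C * p) * n\<^sup>2" by (simp add: power2_eq_square algebra_simps)
  have "n\<^sup>2 \<le> C * p \<or> n = 0"
  proof (cases "n = 0")
    case False
    then have "0 < n\<^sup>2" by simp
    then show ?thesis using mult_le_cancel_right_pos[of "n\<^sup>2" "n\<^sup>2" "C * p"] le by blast
  qed simp
  then show ?thesis
    using positive_op_nonneg[OF T f] \<open>C \<ge> 0\<close> by (auto simp: n_def p_def)
qed

section \<open>Adjointability with respect to the matrix-valued inner product\<close>

lemma mat_eq_if_mtrace_mult_eq:
  fixes A B :: "complex^'s^'s"
  assumes "\<And>Y. mtrace (Y ** A) = mtrace (Y ** B)"
  shows "A = B"
proof -
  have entry: "mtrace ((\<chi> i j. if i = b \<and> j = a then 1 else 0) ** C) = C $ a $ b"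
    for a b and C :: "complex^'s^'s"
  proof -
    have "(\<Sum>k\<in>UNIV. (if i = b \<and> k = a then 1 else 0) * C $ k $ i)
        = (if i = b then C $ a $ i else 0)"
      for i by (cases "i = b") (simp_all add: mult_delta_left)
    then show ?thesis by (simp add: mtrace_def matrix_matrix_mult_def)
  qed
  show ?thesis
    using assms entry by (simp add: vec_eq_iff) metis
qed

lemma aeq_if_sip_eq:
  assumes f: "f \<in> L2m M" and g: "g \<in> L2m M" and eq: "\<And>h. h \<in> L2m M \<Longrightarrow> sip M f h = sip M g h"
  shows "aeq M f g"
proof -
  have d: "(\<lambda>x. f x - g x) \<in> L2m M" using f g by (rule L2m_diff)
  have "of_real ((l2norm M (\<lambda>x. f x - g x))\<^sup>2) = sip M f (\<lambda>x. f x - g x) - sip M g (\<lambda>x. f x - g x)"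
    using sip_diff_left[OF f g d] sip_self[OF d] by simp
  then have "l2norm M (\<lambda>x. f x - g x) = 0"
    using eq[OF d] by simp
  then show ?thesis using aeq_iff_l2norm_diff[OF f g] by simp
qed

lemma ops_commute_lmult_if_adjointable:
  fixes U :: "('a \<Rightarrow> complex^'r::finite^'s::finite) \<Rightarrow> ('a \<Rightarrow> complex^'r^'s)"
    and X :: "complex^'s^'s"
  assumes U: "bounded_linear_op M U" and "adjointable_op M U"
  shows "ops_commute M U (\<lambda>f x. X ** f x)"
  unfolding ops_commute_def
proof
  fix f :: "'a \<Rightarrow> complex^'r^'s" assume f: "f \<in> L2m M"
  obtain V where V: "bounded_linear_op M V"
    and UV: "\<And>h g. h \<in> L2m M \<Longrightarrow> g \<in> L2m M \<Longrightarrow> mip M (U h) g = mip M h (V g)"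
    using \<open>adjointable_op M U\<close> unfolding adjointable_op_def by blast
  have Xf: "(\<lambda>x. X ** f x) \<in> L2m M" using f by (rule L2m_lmult)
  have Uf: "U f \<in> L2m M" using U f by (rule bounded_linear_op_L2m)
  show "aeq M (U (\<lambda>x. X ** f x)) (\<lambda>x. X ** U f x)"
  proof (rule aeq_if_sip_eq[OF bounded_linear_op_L2m[OF U Xf] L2m_lmult[OF Uf]])
    fix g :: "'a \<Rightarrow> complex^'r^'s" assume g: "g \<in> L2m M"
    have Vg: "V g \<in> L2m M" using V g by (rule bounded_linear_op_L2m)
    have "sip M (U (\<lambda>x. X ** f x)) g = sip M (\<lambda>x. X ** f x) (V g)"
      by (simp add: sip_def UV[OF Xf g])
    also have "\<dots> = mtrace (X ** mip M f (V g))" by (rule sip_lmult[OF f Vg])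
    also have "\<dots> = sip M (\<lambda>x. X ** U f x) g" by (simp add: UV[OF f g] sip_lmult[OF Uf g])
    finally show "sip M (U (\<lambda>x. X ** f x)) g = sip M (\<lambda>x. X ** U f x) g" .
  qed
qed

lemma adjointable_op_if_commutes_lmult:
  fixes U :: "('a \<Rightarrow> complex^'r::finite^'s::finite) \<Rightarrow> ('a \<Rightarrow> complex^'r^'s)"
  assumes U: "bounded_linear_op M U"
    and sym: "\<And>f g. f \<in> L2m M \<Longrightarrow> g \<in> L2m M \<Longrightarrow> sip M (U f) g = sip M f (U g)"
    and lmult: "\<And>X. ops_commute M U (\<lambda>f x. X ** f x)"
  shows "adjointable_op M U"
  unfolding adjointable_op_def
proof (intro exI[of _ U] conjI U ballI)
  fix f g :: "'a \<Rightarrow> complex^'r^'s" assume f: "f \<in> L2m M" and g: "g \<in> L2m M"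
  have Uf: "U f \<in> L2m M" and Ug: "U g \<in> L2m M" using U f g by (simp_all add: bounded_linear_op_L2m)
  show "mip M (U f) g = mip M f (U g)"
  proof (rule mat_eq_if_mtrace_mult_eq)
    fix Y
    have "mtrace (Y ** mip M (U f) g) = sip M (\<lambda>x. Y ** U f x) g"
      by (rule sip_lmult[OF Uf g, symmetric])
    also have "\<dots> = sip M (U (\<lambda>x. Y ** f x)) g"
      by (rule sip_cong[OF L2m_lmult[OF Uf] g bounded_linear_op_L2m[OF U L2m_lmult[OF f]] g
            aeq_sym[OF ops_commuteD[OF lmult f]] aeq_refl])
    also have "\<dots> = sip M (\<lambda>x. Y ** f x) (U g)" by (rule sym[OF L2m_lmult[OF f] g])
    also have "\<dots> = mtrace (Y ** mip M f (U g))" by (rule sip_lmult[OF f Ug])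
    finally show "mtrace (Y ** mip M (U f) g) = mtrace (Y ** mip M f (U g))" .
  qed
qed

section \<open>The binomial series of $\sqrt{1 - z}$\<close>

definition sqrt_coeff :: "nat \<Rightarrow> real"
  where "sqrt_coeff n = (-1)^n * ((1/2) gchoose n)"

lemma sqrt_coeff_0 [simp]: "sqrt_coeff 0 = 1"
  by (simp add: sqrt_coeff_def)

lemma sqrt_coeff_nonpos: "n \<noteq> 0 \<Longrightarrow> sqrt_coeff n \<le> 0"
proof -
  assume "n \<noteq> 0"
  then obtain m where m: "n = Suc m" by (cases n) auto
  have "pochhammer (1/2::real) m > 0" by (rule pochhammer_pos) simp
  then show ?thesis
    by (simp add: sqrt_coeff_def gbinomial_pochhammer m pochhammer_rec divide_nonpos_pos)
qed

lemma sum_sqrt_coeff_nonneg: "0 \<le> (\<Sum>n<N. sqrt_coeff n)"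
proof (cases N)
  case (Suc m)
  have "(\<Sum>n<N. sqrt_coeff n) = (\<Sum>k\<le>m. ((1/2::real) gchoose k) * (-1)^k)"
    using Suc by (simp add: sqrt_coeff_def mult.commute lessThan_Suc_atMost)
  also have "\<dots> = (-1)^m * ((1/2 - 1) gchoose m)" by (rule gbinomial_sum_lower_neg)
  also have "\<dots> = pochhammer (1/2) m / fact m" by (simp add: gbinomial_pochhammer)
  finally show ?thesis by (simp add: pochhammer_pos less_imp_le)
qed simp

lemma summable_abs_sqrt_coeff: "summable (\<lambda>n. \<bar>sqrt_coeff n\<bar>)"
proof (rule summableI_nonneg_bounded)
  fix N
  have "(\<Sum>n<N. \<bar>sqrt_coeff n\<bar>) \<le> (\<Sum>n<N. 2 * of_bool (n = 0) - sqrt_coeff n)"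
    using sqrt_coeff_nonpos by (intro sum_mono) auto
  also have "\<dots> \<le> 2 - (\<Sum>n<N. sqrt_coeff n)"
    by (cases N) (simp_all add: sum_subtractf sum.distrib)
  also have "\<dots> \<le> 2" using sum_sqrt_coeff_nonneg[of N] by simp
  finally show "(\<Sum>n<N. \<bar>sqrt_coeff n\<bar>) \<le> 2" .
qed simp

text \<open>The Cauchy square of the series is $1 - z$.\<close>

lemma sqrt_coeff_convolution:
  "(\<Sum>i\<le>n. sqrt_coeff i * sqrt_coeff (n - i)) = (if n = 0 then 1 else if n = 1 then -1 else 0)"
proof -
  have "(\<Sum>i\<le>n. sqrt_coeff i * sqrt_coeff (n - i))
      = (-1)^n * (\<Sum>i\<le>n. ((1/2::real) gchoose i) * ((1/2) gchoose (n - i)))"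
    unfolding sum_distrib_left
  proof (rule sum.cong)
    fix i assume "i \<in> {..n}"
    then have "(-1::real)^i * (-1)^(n - i) = (-1)^n" by (simp flip: power_add)
    then show "sqrt_coeff i * sqrt_coeff (n - i)
        = (-1)^n * (((1/2) gchoose i) * ((1/2) gchoose (n - i)))"
      by (simp add: sqrt_coeff_def algebra_simps)
  qed simp
  also have "\<dots> = (-1)^n * of_nat (1 choose n)"
    using gbinomial_Vandermonde[of "1/2::real" "1/2" n] binomial_gbinomial[of 1 n, where 'a=real]
    by (simp add: atMost_atLeast0)
  also have "\<dots> = (if n = 0 then 1 else if n = 1 then -1 else 0)"
    by (cases n) (auto simp: binomial_eq_0)
  finally show ?thesis .
qed

section \<open>Strong limits of uniformly bounded operators\<close>

locale strongly_convergent_ops =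
  fixes M :: "'a measure"
    and P :: "nat \<Rightarrow> ('a \<Rightarrow> complex^'r::finite^'s::finite) \<Rightarrow> ('a \<Rightarrow> complex^'r^'s)"
    and A :: real
  assumes bounded: "\<And>N. bounded_linear_op M (P N)"
    and uniform: "\<And>N f. f \<in> L2m M \<Longrightarrow> l2norm M (P N f) \<le> A * l2norm M f"
    and Cauchy: "\<And>f. f \<in> L2m M \<Longrightarrow> l2_Cauchy M (\<lambda>N. P N f)"
begin

definition lim_op :: "('a \<Rightarrow> complex^'r^'s) \<Rightarrow> ('a \<Rightarrow> complex^'r^'s)"
  where "lim_op f = l2_lim M (\<lambda>N. P N f)"

lemma L2m_P: "f \<in> L2m M \<Longrightarrow> P N f \<in> L2m M"
  by (rule bounded_linear_op_L2m[OF bounded])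

lemma L2m_lim_op: "f \<in> L2m M \<Longrightarrow> lim_op f \<in> L2m M"
  unfolding lim_op_def by (rule l2_lim(1)[OF L2m_P Cauchy])

lemma l2_tendsto_lim_op: "f \<in> L2m M \<Longrightarrow> l2_tendsto M (\<lambda>N. P N f) (lim_op f)"
  unfolding lim_op_def by (rule l2_lim(2)[OF L2m_P Cauchy])

lemma l2_tendsto_diagonal:
  assumes u: "\<And>N. u N \<in> L2m M" and a: "a \<in> L2m M" and "l2_tendsto M u a"
  shows "l2_tendsto M (\<lambda>N. P N (u N)) (lim_op a)"
proof (rule l2_tendsto_if_le[OF always_eventually[OF allI]])
  show "l2norm M (\<lambda>x. P N (u N) x - lim_op a x)
      \<le> A * l2norm M (\<lambda>x. u N x - a x) + l2norm M (\<lambda>x. P N a x - lim_op a x)" for N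
  proof -
    have "l2norm M (\<lambda>x. P N (u N) x - lim_op a x)
        \<le> l2norm M (\<lambda>x. P N (u N) x - P N a x) + l2norm M (\<lambda>x. P N a x - lim_op a x)"
      by (rule l2norm_triangle[OF L2m_P[OF u] L2m_P[OF a] L2m_lim_op[OF a]])
    also have "l2norm M (\<lambda>x. P N (u N) x - P N a x) \<le> A * l2norm M (\<lambda>x. u N x - a x)"
      by (rule l2norm_bounded_linear_op_diff[OF bounded uniform u a])
    finally show ?thesis by simp
  qed
  have "(\<lambda>N. l2norm M (\<lambda>x. u N x - a x)) \<longlonglongrightarrow> 0" "(\<lambda>N. l2norm M (\<lambda>x. P N a x - lim_op a x)) \<longlonglongrightarrow> 0"
    using \<open>l2_tendsto M u a\<close> l2_tendsto_lim_op[OF a] by (simp_all add: l2_tendsto_def)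
  from tendsto_add[OF tendsto_mult_right_zero[OF this(1)] this(2)]
  show "(\<lambda>N. A * l2norm M (\<lambda>x. u N x - a x) + l2norm M (\<lambda>x. P N a x - lim_op a x)) \<longlonglongrightarrow> 0"
    by simp
qed

lemma lim_op_aeq:
  assumes u: "\<And>N. u N \<in> L2m M" and a: "a \<in> L2m M" and f: "f \<in> L2m M"
    and "\<And>N. aeq M (P N f) (u N)" and "l2_tendsto M u a"
  shows "aeq M (lim_op f) a"
proof -
  have "l2_tendsto M (\<lambda>N. P N f) a"
    by (rule l2_tendsto_aeq[OF u L2m_P[OF f] a aeq_sym[OF assms(4)] assms(5)])
  then show ?thesis
    by (rule l2_tendsto_unique[OF L2m_P[OF f] L2m_lim_op[OF f] a l2_tendsto_lim_op[OF f]])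
qed

lemma bounded_lim_op: "bounded_linear_op M lim_op"
proof (rule bounded_linear_opI[where C=A])
  fix f g :: "'a \<Rightarrow> complex^'r^'s" and a b assume f: "f \<in> L2m M" and g: "g \<in> L2m M"
  show "lim_op f \<in> L2m M" using f by (rule L2m_lim_op)
  show "aeq M (lim_op f) (lim_op g)" if "aeq M f g"
    by (rule lim_op_aeq[OF L2m_P[OF g] L2m_lim_op[OF g] f bounded_linear_op_aeq[OF bounded f g that]
          l2_tendsto_lim_op[OF g]])
  show "aeq M (lim_op (\<lambda>x. cscale a (f x) + cscale b (g x)))
      (\<lambda>x. cscale a (lim_op f x) + cscale b (lim_op g x))"
  proof (rule lim_op_aeq[OF _ _ L2m_add[OF L2m_cscale[OF f] L2m_cscale[OF g]]
        bounded_linear_op_linear[OF bounded f g]])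
    show "l2_tendsto M (\<lambda>N x. cscale a (P N f x) + cscale b (P N g x))
        (\<lambda>x. cscale a (lim_op f x) + cscale b (lim_op g x))"
      using f g
      by (intro l2_tendsto_add l2_tendsto_cscale l2_tendsto_lim_op L2m_cscale L2m_P L2m_lim_op)
  qed (use f g in \<open>simp_all add: L2m_add L2m_cscale L2m_P L2m_lim_op\<close>)
  show "l2norm M (lim_op f) \<le> A * l2norm M f"
    using f by (intro tendsto_upperbound[OF l2_tendsto_l2norm[OF L2m_P L2m_lim_op l2_tendsto_lim_op]]
        always_eventually allI uniform) simp_all
qed

lemma ops_commute_lim_op:
  fixes B :: "('a \<Rightarrow> complex^'r^'s) \<Rightarrow> ('a \<Rightarrow> complex^'r^'s)"
  assumes B: "bounded_linear_op M B" and BP: "\<And>N. ops_commute M B (P N)"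
  shows "ops_commute M B lim_op"
  unfolding ops_commute_def
proof
  fix f :: "'a \<Rightarrow> complex^'r^'s" assume f: "f \<in> L2m M"
  have Bf: "B f \<in> L2m M" using B f by (rule bounded_linear_op_L2m)
  have BW: "B (lim_op f) \<in> L2m M" using B L2m_lim_op[OF f] by (rule bounded_linear_op_L2m)
  have "l2_tendsto M (\<lambda>N. B (P N f)) (B (lim_op f))"
    by (rule l2_tendsto_bounded_linear_op[OF B L2m_P[OF f] L2m_lim_op[OF f]
          l2_tendsto_lim_op[OF f]])
  then show "aeq M (B (lim_op f)) (lim_op (B f))"
    using lim_op_aeq[OF _ BW Bf aeq_sym[OF ops_commuteD[OF BP f]]] B f
    by (simp add: aeq_sym bounded_linear_op_L2m L2m_P)
qed

lemma sym_lim_op: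
  assumes sym: "\<And>N f g. f \<in> L2m M \<Longrightarrow> g \<in> L2m M \<Longrightarrow> sip M (P N f) g = sip M f (P N g)"
    and f: "f \<in> L2m M" and g: "g \<in> L2m M"
  shows "sip M (lim_op f) g = sip M f (lim_op g)"
proof -
  have "(\<lambda>N. sip M (P N f) g) \<longlonglongrightarrow> sip M (lim_op f) g"
    by (rule l2_tendsto_sip[OF L2m_P[OF f] L2m_lim_op[OF f] g l2_tendsto_lim_op[OF f]])
  moreover have "(\<lambda>N. cnj (sip M (P N g) f)) \<longlonglongrightarrow> cnj (sip M (lim_op g) f)"
    by (rule tendsto_cnj[OF l2_tendsto_sip[OF L2m_P[OF g] L2m_lim_op[OF g] f
          l2_tendsto_lim_op[OF g]]])
  then have "(\<lambda>N. sip M f (P N g)) \<longlonglongrightarrow> sip M f (lim_op g)"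
    using sip_commute[OF L2m_P[OF g] f] sip_commute[OF L2m_lim_op[OF g] f] by simp
  ultimately show ?thesis
    using sym[OF f g] by (simp add: LIMSEQ_unique)
qed

lemma nonneg_lim_op:
  assumes "\<And>N. 0 \<le> Re (sip M (P N f) f)" and f: "f \<in> L2m M"
  shows "0 \<le> Re (sip M (lim_op f) f)"
  using assms(1) by (intro tendsto_lowerbound[OF tendsto_Re[OF l2_tendsto_sip[OF L2m_P[OF f]
        L2m_lim_op[OF f] f l2_tendsto_lim_op[OF f]]]] always_eventually allI) simp_all

end

section \<open>The square root of $I - S$ for a self-adjoint contraction $S$\<close>

lemma sqrt_coeff_double_sum:
  fixes X :: "nat \<Rightarrow> 'v::real_vector"
  assumes "N \<ge> 2"
  shows "(\<Sum>n<N. \<Sum>m<N. (sqrt_coeff n * sqrt_coeff m) *\<^sub>R X (n + m))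
    = X 0 - X 1 + (\<Sum>(i, j)\<in>{..<N} \<times> {..<N} - {(i, j). i + j < N}.
        (sqrt_coeff i * sqrt_coeff j) *\<^sub>R X (i + j))"
proof -
  define g where "g = (\<lambda>(i, j). (sqrt_coeff i * sqrt_coeff j) *\<^sub>R X (i + j))"
  have "(\<Sum>n<N. \<Sum>m<N. (sqrt_coeff n * sqrt_coeff m) *\<^sub>R X (n + m)) = sum g ({..<N} \<times> {..<N})"
    by (simp add: sum.cartesian_product g_def)
  also have "\<dots> = sum g ({..<N} \<times> {..<N} - {(i, j). i + j < N}) + sum g {(i, j). i + j < N}"
    by (rule sum.subset_diff) auto
  also have "sum g {(i, j). i + j < N} = (\<Sum>k<N. \<Sum>i\<le>k. g (i, k - i))"
    using sum.triangle_reindex[of "\<lambda>i j. g (i, j)" N] by (simp add: split_beta)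
  also have "\<dots> = (\<Sum>k<N. (if k = 0 then 1 else if k = 1 then -1 else 0) *\<^sub>R X k)"
    by (simp add: g_def sqrt_coeff_convolution flip: scaleR_sum_left)
  also have "\<dots> = X 0 - X 1"
    using assms by (subst sum.mono_neutral_right[of _ "{0, 1}"]) auto
  finally show ?thesis by (simp add: g_def)
qed

lemma tendsto_sqrt_coeff_tail:
  "(\<lambda>N. \<Sum>(i, j)\<in>{..<N} \<times> {..<N} - {(i, j). i + j < N}. \<bar>sqrt_coeff i * sqrt_coeff j\<bar>) \<longlonglongrightarrow> 0"
proof -
  define s where "s K = (\<Sum>k<K. \<bar>sqrt_coeff k\<bar>)" for K
  have square: "(\<Sum>(i, j)\<in>{..<K} \<times> {..<K}. \<bar>sqrt_coeff i * sqrt_coeff j\<bar>) = (s K)\<^sup>2" for K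
    by (simp add: s_def power2_eq_square sum_product sum.cartesian_product abs_mult)
  have bound: "(\<Sum>(i, j)\<in>{..<N} \<times> {..<N} - {(i, j). i + j < N}. \<bar>sqrt_coeff i * sqrt_coeff j\<bar>)
      \<le> (s N)\<^sup>2 - (s (N div 2))\<^sup>2" for N
  proof -
    have sub: "{..<N div 2} \<times> {..<N div 2} \<subseteq> {..<N} \<times> {..<N}" by auto
    have "(\<Sum>(i, j)\<in>{..<N} \<times> {..<N} - {(i, j). i + j < N}. \<bar>sqrt_coeff i * sqrt_coeff j\<bar>)
        \<le> (\<Sum>(i, j)\<in>{..<N} \<times> {..<N} - {..<N div 2} \<times> {..<N div 2}. \<bar>sqrt_coeff i * sqrt_coeff j\<bar>)"
      by (intro sum_mono2) auto
    also have "\<dots> = (s N)\<^sup>2 - (s (N div 2))\<^sup>2"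
      by (simp add: sum_diff[OF _ sub] square)
    finally show ?thesis .
  qed
  have s: "s \<longlonglongrightarrow> (\<Sum>k. \<bar>sqrt_coeff k\<bar>)"
    unfolding s_def by (rule summable_LIMSEQ[OF summable_abs_sqrt_coeff])
  have "Z \<le> N div 2" if "2 * Z \<le> N" for Z N :: nat
    using that by presburger
  then have "filterlim (\<lambda>N::nat. N div 2) at_top sequentially"
    unfolding filterlim_at_top eventually_sequentially by blast
  then have "(\<lambda>N. (s N)\<^sup>2 - (s (N div 2))\<^sup>2)
      \<longlonglongrightarrow> (\<Sum>k. \<bar>sqrt_coeff k\<bar>)\<^sup>2 - (\<Sum>k. \<bar>sqrt_coeff k\<bar>)\<^sup>2"
    by (intro tendsto_intros s filterlim_compose[OF s])
  then have lim: "(\<lambda>N. (s N)\<^sup>2 - (s (N div 2))\<^sup>2) \<longlonglongrightarrow> 0"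
    by simp
  have "\<forall>N. 0 \<le> (\<Sum>(i, j)\<in>{..<N} \<times> {..<N} - {(i, j). i + j < N}. \<bar>sqrt_coeff i * sqrt_coeff j\<bar>)"
    by (simp add: sum_nonneg split_beta)
  from always_eventually[OF this] always_eventually[OF allI[OF bound]]
  show ?thesis by (rule tendsto_sandwich[OF _ _ tendsto_const lim])
qed

locale self_adjoint_contraction =
  fixes M :: "'a measure" and S :: "('a \<Rightarrow> complex^'r::finite^'s::finite) \<Rightarrow> ('a \<Rightarrow> complex^'r^'s)"
  assumes bounded_S: "bounded_linear_op M S"
    and sym_S: "\<And>f g. f \<in> L2m M \<Longrightarrow> g \<in> L2m M \<Longrightarrow> sip M (S f) g = sip M f (S g)"
    and contraction: "\<And>f. f \<in> L2m M \<Longrightarrow> l2norm M (S f) \<le> l2norm M f"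
begin

lemma L2m_S_pow: "f \<in> L2m M \<Longrightarrow> (S ^^ n) f \<in> L2m M"
  by (rule bounded_linear_op_L2m[OF bounded_linear_op_funpow[OF bounded_S]])

lemma l2norm_S_pow_le: "f \<in> L2m M \<Longrightarrow> l2norm M ((S ^^ n) f) \<le> l2norm M f"
proof (induction n)
  case (Suc n)
  then show ?case using contraction[OF L2m_S_pow[OF Suc.prems, of n]] by simp
qed simp

lemma sym_S_pow: "f \<in> L2m M \<Longrightarrow> g \<in> L2m M \<Longrightarrow> sip M ((S ^^ n) f) g = sip M f ((S ^^ n) g)"
proof (induction n arbitrary: g)
  case (Suc n)
  have "sip M (S ((S ^^ n) f)) g = sip M f ((S ^^ n) (S g))"
    using Suc bounded_linear_op_L2m[OF bounded_S] by (simp add: sym_S L2m_S_pow)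
  then show ?case by (simp add: funpow_swap1)
qed simp

lemma l2norm_sum_S_pow_le:
  assumes f: "f \<in> L2m M" and "finite I"
  shows "l2norm M (\<lambda>x. \<Sum>i\<in>I. cscale (of_real (c i)) ((S ^^ k i) f x)) \<le> (\<Sum>i\<in>I. \<bar>c i\<bar>) * l2norm M f"
  using \<open>finite I\<close>
proof (induction I rule: finite_induct)
  case (insert a A)
  have "l2norm M (\<lambda>x. \<Sum>i\<in>insert a A. cscale (of_real (c i)) ((S ^^ k i) f x))
      \<le> l2norm M (\<lambda>x. cscale (of_real (c a)) ((S ^^ k a) f x))
        + l2norm M (\<lambda>x. \<Sum>i\<in>A. cscale (of_real (c i)) ((S ^^ k i) f x))"
    using insert.hyps f by (simp add: l2norm_add_le L2m_cscale L2m_sum L2m_S_pow)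
  also have "\<dots> \<le> \<bar>c a\<bar> * l2norm M f + (\<Sum>i\<in>A. \<bar>c i\<bar>) * l2norm M f"
    using l2norm_S_pow_le[OF f, of "k a"] insert.IH
    by (intro add_mono) (auto simp: l2norm_cscale mult_left_mono)
  finally show ?case using insert.hyps by (simp add: algebra_simps)
qed (simp add: l2norm_def)

definition sqrt_partial :: "nat \<Rightarrow> ('a \<Rightarrow> complex^'r^'s) \<Rightarrow> ('a \<Rightarrow> complex^'r^'s)"
  where "sqrt_partial N f = (\<lambda>x. \<Sum>n<N. cscale (of_real (sqrt_coeff n)) ((S ^^ n) f x))"

lemma bounded_sqrt_partial: "bounded_linear_op M (sqrt_partial N)"
  unfolding sqrt_partial_def[abs_def]
  by (rule bounded_linear_op_sum_op[OF finite_lessThan bounded_linear_op_funpow[OF bounded_S]])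

lemma l2norm_sqrt_partial_le:
  "f \<in> L2m M \<Longrightarrow> l2norm M (sqrt_partial N f) \<le> (\<Sum>n. \<bar>sqrt_coeff n\<bar>) * l2norm M f"
  unfolding sqrt_partial_def
  by (rule order_trans[OF l2norm_sum_S_pow_le[OF _ finite_lessThan, where k="\<lambda>n. n"]
        mult_right_mono[OF sum_le_suminf[OF summable_abs_sqrt_coeff] l2norm_nonneg]]) auto

lemma l2_Cauchy_sqrt_partial:
  assumes f: "f \<in> L2m M"
  shows "l2_Cauchy M (\<lambda>N. sqrt_partial N f)"
proof -
  have diff: "l2norm M (\<lambda>x. sqrt_partial n f x - sqrt_partial m f x)
      \<le> (\<Sum>k\<in>{m..<n}. \<bar>sqrt_coeff k\<bar>) * l2norm M f" if "m \<le> n" for m n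
  proof -
    have "(\<lambda>x. sqrt_partial n f x - sqrt_partial m f x)
        = (\<lambda>x. \<Sum>k\<in>{m..<n}. cscale (of_real (sqrt_coeff k)) ((S ^^ k) f x))"
      using that
      by (simp add: sqrt_partial_def sum_diff_nat_ivl[of 0 m n, symmetric] atLeast0LessThan)
    then show ?thesis
      using l2norm_sum_S_pow_le[OF f, of "{m..<n}" sqrt_coeff "\<lambda>k. k"] by simp
  qed
  show ?thesis
    unfolding l2_Cauchy_def
  proof (intro allI impI)
    fix e :: real assume "e > 0"
    then have "e / (l2norm M f + 1) > 0"
      using l2norm_nonneg[of M f] by simp
    then obtain N where "\<forall>m\<ge>N. \<forall>n. norm (\<Sum>k\<in>{m..<n}. \<bar>sqrt_coeff k\<bar>) < e / (l2norm M f + 1)"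
      using summable_abs_sqrt_coeff unfolding summable_Cauchy by blast
    then have N: "\<And>m n. m \<ge> N \<Longrightarrow> (\<Sum>k\<in>{m..<n}. \<bar>sqrt_coeff k\<bar>) < e / (l2norm M f + 1)"
      by (simp add: sum_nonneg)
    have small: "l2norm M (\<lambda>x. sqrt_partial n f x - sqrt_partial m f x) < e"
      if "N \<le> m" "m \<le> n" for m n
    proof -
      have "l2norm M (\<lambda>x. sqrt_partial n f x - sqrt_partial m f x)
          \<le> e / (l2norm M f + 1) * l2norm M f"
        using diff[OF that(2)] mult_right_mono[OF less_imp_le[OF N[OF that(1)]] l2norm_nonneg]
        by (rule order_trans)
      also have "\<dots> < e"
        using \<open>e > 0\<close> l2norm_nonneg[of M f] by (simp add: field_simps)
      finally show ?thesis .
    qed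
    show "\<exists>N. \<forall>m\<ge>N. \<forall>n\<ge>N. l2norm M (\<lambda>x. sqrt_partial m f x - sqrt_partial n f x) < e"
    proof (intro exI allI impI)
      fix m n assume "N \<le> m" "N \<le> n"
      then show "l2norm M (\<lambda>x. sqrt_partial m f x - sqrt_partial n f x) < e"
        using small[of n m] small[of m n] l2norm_minus_commute[of M "sqrt_partial m f"]
        by (cases "m \<le> n") auto
    qed
  qed
qed

sublocale strongly_convergent_ops M sqrt_partial "\<Sum>n. \<bar>sqrt_coeff n\<bar>"
  by unfold_locales
    (simp_all add: bounded_sqrt_partial l2norm_sqrt_partial_le l2_Cauchy_sqrt_partial)

lemma sqrt_partial_square:
  assumes f: "f \<in> L2m M"
  shows "aeq M (sqrt_partial N (sqrt_partial N f))
    (\<lambda>x. \<Sum>n<N. \<Sum>m<N. cscale (of_real (sqrt_coeff n * sqrt_coeff m)) ((S ^^ (n + m)) f x))"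
proof -
  have "aeq M ((S ^^ n) (sqrt_partial N f))
      (\<lambda>x. \<Sum>m<N. cscale (of_real (sqrt_coeff m)) ((S ^^ n) ((S ^^ m) f) x))" for n
    unfolding sqrt_partial_def
    by (rule bounded_linear_op_sum[OF bounded_linear_op_funpow[OF bounded_S] finite_lessThan
          L2m_S_pow[OF f]])
  then have "aeq M (sqrt_partial N (sqrt_partial N f))
      (\<lambda>x. \<Sum>n<N. cscale (of_real (sqrt_coeff n))
        (\<Sum>m<N. cscale (of_real (sqrt_coeff m)) ((S ^^ n) ((S ^^ m) f) x)))"
    unfolding sqrt_partial_def[of N "sqrt_partial N f"] by (intro aeq_sum aeq_cscale) auto
  then show ?thesis
    by (rule aeq_pointwise_trans) (simp add: cscale_sum cscale_cscale funpow_add)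
qed

lemma l2_tendsto_sqrt_partial_square:
  assumes f: "f \<in> L2m M"
  shows "l2_tendsto M (\<lambda>N. sqrt_partial N (sqrt_partial N f)) (\<lambda>x. f x - S f x)"
proof (rule l2_tendsto_if_le)
  define Q where "Q N = {..<N} \<times> {..<N} - {(i, j). i + j < N}" for N :: nat
  define c where "c = (\<lambda>(i, j). sqrt_coeff i * sqrt_coeff j)"
  define R where "R N = (\<lambda>x. \<Sum>p\<in>Q N. cscale (of_real (c p)) ((S ^^ (fst p + snd p)) f x))" for N
  have L2: "sqrt_partial N (sqrt_partial N f) \<in> L2m M" "(\<lambda>x. f x - S f x + R N x) \<in> L2m M" for N
    using f bounded_linear_op_L2m[OF bounded_S f]
    by (simp_all add: R_def L2m_P L2m_add L2m_diff L2m_sum L2m_cscale L2m_S_pow)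
  have "l2norm M (\<lambda>x. sqrt_partial N (sqrt_partial N f) x - (f x - S f x))
      \<le> (\<Sum>p\<in>Q N. \<bar>c p\<bar>) * l2norm M f" if "N \<ge> 2" for N
  proof -
    have "aeq M (sqrt_partial N (sqrt_partial N f)) (\<lambda>x. f x - S f x + R N x)"
      using sqrt_partial_square[OF f, of N] sqrt_coeff_double_sum[OF that, of "\<lambda>k. (S ^^ k) f _"]
      by (simp add: R_def Q_def c_def scaleR_eq_cscale split_beta aeq_def)
    then have "l2norm M (\<lambda>x. sqrt_partial N (sqrt_partial N f) x - (f x - S f x))
        = l2norm M (\<lambda>x. (f x - S f x + R N x) - (f x - S f x))"
      using L2 f bounded_linear_op_L2m[OF bounded_S f]
      by (intro l2norm_cong L2m_diff aeq_diff aeq_refl) simp_all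
    also have "\<dots> \<le> (\<Sum>p\<in>Q N. \<bar>c p\<bar>) * l2norm M f"
      unfolding R_def by (simp add: l2norm_sum_S_pow_le[OF f] Q_def)
    finally show ?thesis .
  qed
  note bound = this
  show "\<forall>\<^sub>F N in sequentially. l2norm M (\<lambda>x. sqrt_partial N (sqrt_partial N f) x - (f x - S f x))
      \<le> (\<Sum>p\<in>Q N. \<bar>c p\<bar>) * l2norm M f"
    using eventually_ge_at_top[of 2] by eventually_elim (rule bound)
  show "(\<lambda>N. (\<Sum>p\<in>Q N. \<bar>c p\<bar>) * l2norm M f) \<longlonglongrightarrow> 0"
    using tendsto_mult_left_zero[OF tendsto_sqrt_coeff_tail]
    by (simp add: Q_def c_def split_beta)
qed

lemma lim_op_square: "f \<in> L2m M \<Longrightarrow> aeq M (lim_op (lim_op f)) (\<lambda>x. f x - S f x)"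
  by (rule l2_tendsto_unique[OF _ L2m_lim_op[OF L2m_lim_op] L2m_diff[OF _ bounded_linear_op_L2m[OF bounded_S]]
        l2_tendsto_diagonal[OF L2m_P L2m_lim_op l2_tendsto_lim_op] l2_tendsto_sqrt_partial_square])
    (simp_all add: L2m_P)

lemma positive_lim_op: "positive_op M lim_op"
proof (rule positive_opI[OF bounded_lim_op sym_lim_op nonneg_lim_op])
  fix N and f g :: "'a \<Rightarrow> complex^'r^'s" assume f: "f \<in> L2m M" and g: "g \<in> L2m M"
  show "sip M (sqrt_partial N f) g = sip M f (sqrt_partial N g)"
    using f g
    by (simp add: sqrt_partial_def sip_sum_left sip_sum_right sip_cscale_left sip_cscale_right
        L2m_cscale L2m_S_pow sym_S_pow)
  have "0 \<le> (\<Sum>n<N. sqrt_coeff n) * (l2norm M f)\<^sup>2"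
    using sum_sqrt_coeff_nonneg[of N] by simp
  also have "\<dots> \<le> (\<Sum>n<N. sqrt_coeff n * Re (sip M ((S ^^ n) f) f))"
    unfolding sum_distrib_right
  proof (rule sum_mono)
    fix n
    have "Re (sip M ((S ^^ n) f) f) \<le> cmod (sip M ((S ^^ n) f) f)"
      by (rule complex_Re_le_cmod)
    also have "\<dots> \<le> l2norm M ((S ^^ n) f) * l2norm M f"
      by (rule sip_cauchy_schwarz[OF L2m_S_pow[OF f] f])
    also have "\<dots> \<le> (l2norm M f)\<^sup>2"
      using mult_right_mono[OF l2norm_S_pow_le[OF f] l2norm_nonneg[of M f]]
      by (simp add: power2_eq_square)
    finally show "sqrt_coeff n * (l2norm M f)\<^sup>2 \<le> sqrt_coeff n * Re (sip M ((S ^^ n) f) f)"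
      using sqrt_coeff_nonpos[of n] Re_sip_self[OF f]
      by (cases "n = 0") (auto intro: mult_left_mono_neg)
  qed
  also have "\<dots> = Re (sip M (sqrt_partial N f) f)"
    using f by (simp add: sqrt_partial_def sip_sum_left sip_cscale_left L2m_cscale L2m_S_pow)
  finally show "0 \<le> Re (sip M (sqrt_partial N f) f)" .
qed

lemma ops_commute_lim_op_if_commute:
  assumes B: "bounded_linear_op M B" and "ops_commute M B S"
  shows "ops_commute M B lim_op"
proof (rule ops_commute_lim_op[OF B])
  show "ops_commute M B (sqrt_partial N)" for N
    unfolding sqrt_partial_def[abs_def]
    by (rule ops_commute_sum[OF B finite_lessThan bounded_linear_op_funpow[OF bounded_S]
          ops_commute_funpow[OF B bounded_S assms(2)]])
qed

end

section \<open>The positive square root of a positive operator\<close>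

lemma l2norm_sub_scaled_positive_op_le:
  assumes T: "positive_op M T" and "C > 0"
    and C: "\<And>h. h \<in> L2m M \<Longrightarrow> l2norm M (T h) \<le> C * l2norm M h" and f: "f \<in> L2m M"
  shows "l2norm M (\<lambda>x. f x - cscale (of_real (1 / C)) (T f x)) \<le> l2norm M f"
proof -
  define d where "d = 1 / C"
  define p where "p = Re (sip M (T f) f)"
  have Tf: "T f \<in> L2m M" by (rule bounded_linear_op_L2m[OF positive_op_bounded[OF T] f])
  have dTf: "(\<lambda>x. cscale (of_real d) (T f x)) \<in> L2m M" using Tf by (rule L2m_cscale)
  have "p \<ge> 0" unfolding p_def by (rule positive_op_nonneg[OF T f])
  have "Re (sip M f (T f)) = p"
    unfolding p_def using sip_commute[OF Tf f] by simp
  have "(l2norm M (\<lambda>x. f x - cscale (of_real d) (T f x)))\<^sup>2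
      = Re (sip M (\<lambda>x. f x - cscale (of_real d) (T f x)) (\<lambda>x. f x - cscale (of_real d) (T f x)))"
    by (rule Re_sip_self[symmetric, OF L2m_diff[OF f dTf]])
  also have "sip M (\<lambda>x. f x - cscale (of_real d) (T f x)) (\<lambda>x. f x - cscale (of_real d) (T f x))
      = sip M f f - of_real d * sip M f (T f) - of_real d * sip M (T f) f
        + of_real d * of_real d * sip M (T f) (T f)"
    using f Tf by (simp add: sip_diff_left sip_diff_right sip_cscale_left sip_cscale_right L2m_diff
        L2m_cscale algebra_simps)
  also have "Re \<dots> = Re (sip M f f) - d * Re (sip M f (T f)) - d * Re (sip M (T f) f)
      + d * d * Re (sip M (T f) (T f))"
    by simp
  also have "\<dots> = (l2norm M f)\<^sup>2 - 2 * d * p + d\<^sup>2 * (l2norm M (T f))\<^sup>2"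
    using \<open>Re (sip M f (T f)) = p\<close> by (simp add: Re_sip_self f Tf p_def power2_eq_square)
  also have "\<dots> \<le> (l2norm M f)\<^sup>2 - 2 * d * p + d\<^sup>2 * (C * p)"
    using mult_left_mono[OF l2norm_positive_op_squared_le[OF T less_imp_le[OF \<open>C > 0\<close>] C f]
        zero_le_power2[of d]]
    by (simp add: p_def)
  also have "\<dots> \<le> (l2norm M f)\<^sup>2"
    using \<open>C > 0\<close> \<open>p \<ge> 0\<close> by (simp add: d_def power2_eq_square field_simps)
  finally show ?thesis
    unfolding d_def by (rule power2_le_imp_le[OF _ l2norm_nonneg])
qed

lemma self_adjoint_contraction_sub_scaled:
  fixes T :: "('a \<Rightarrow> complex^'r::finite^'s::finite) \<Rightarrow> ('a \<Rightarrow> complex^'r^'s)"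
  assumes T: "positive_op M T" and "C > 0"
    and C: "\<And>h. h \<in> L2m M \<Longrightarrow> l2norm M (T h) \<le> C * l2norm M h"
  shows "self_adjoint_contraction M (\<lambda>f x. f x - cscale (of_real (1 / C)) (T f x))"
proof
  have bounded_T: "bounded_linear_op M T" using T by (rule positive_op_bounded)
  show "bounded_linear_op M (\<lambda>f x. f x - cscale (of_real (1 / C)) (T f x))"
    by (rule bounded_linear_op_diff_op[OF bounded_linear_op_id
          bounded_linear_op_cscale_op[OF bounded_T]])
  fix f g :: "'a \<Rightarrow> complex^'r^'s" assume f: "f \<in> L2m M" and g: "g \<in> L2m M"
  show "sip M (\<lambda>x. f x - cscale (of_real (1 / C)) (T f x)) g
      = sip M f (\<lambda>x. g x - cscale (of_real (1 / C)) (T g x))"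
    using f g positive_op_sym[OF T f g] bounded_linear_op_L2m[OF bounded_T]
    by (simp add: sip_diff_left sip_diff_right sip_cscale_left sip_cscale_right L2m_cscale)
  show "l2norm M (\<lambda>x. f x - cscale (of_real (1 / C)) (T f x)) \<le> l2norm M f"
    by (rule l2norm_sub_scaled_positive_op_le[OF T \<open>C > 0\<close> C f])
qed

text \<open>With $C \ge \lVert T\rVert$, $S = I - T/C$ is a self-adjoint contraction and
  $\sqrt{C}\,\sqrt{I - S}$ is the square root of $T$.\<close>

lemma positive_sqrt_exists:
  fixes T :: "('a \<Rightarrow> complex^'r::finite^'s::finite) \<Rightarrow> ('a \<Rightarrow> complex^'r^'s)"
  assumes T: "positive_op M T"
  obtains W where "positive_op M W" "\<And>f. f \<in> L2m M \<Longrightarrow> aeq M (W (W f)) (T f)"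
    "\<And>B. bounded_linear_op M B \<Longrightarrow> ops_commute M B T \<Longrightarrow> ops_commute M B W"
proof -
  have bounded_T: "bounded_linear_op M T" using T by (rule positive_op_bounded)
  obtain C where "C > 0" and C: "\<And>h. h \<in> L2m M \<Longrightarrow> l2norm M (T h) \<le> C * l2norm M h"
    using bounded_linear_op_bound[OF bounded_T] by blast
  define S where "S f = (\<lambda>x. f x - cscale (of_real (1 / C)) (T f x))" for f
  interpret self_adjoint_contraction M S
    unfolding S_def[abs_def] by (rule self_adjoint_contraction_sub_scaled[OF T \<open>C > 0\<close> C])
  define W where "W f = (\<lambda>x. cscale (of_real (sqrt C)) (lim_op f x))" for f
  show ?thesis
  proof (rule that)
    show "positive_op M W"
      unfolding W_def[abs_def] using \<open>C > 0\<close> by (intro positive_op_cscale_op positive_lim_op) simp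
    fix f :: "'a \<Rightarrow> complex^'r^'s" assume f: "f \<in> L2m M"
    have "aeq M (W (W f))
        (\<lambda>x. cscale (of_real (sqrt C)) (cscale (of_real (sqrt C)) (lim_op (lim_op f) x)))"
      unfolding W_def
      by (rule aeq_cscale[OF bounded_linear_op_cscale[OF bounded_lim_op L2m_lim_op[OF f]]])
    also have "aeq M \<dots> (\<lambda>x. cscale (of_real (sqrt C)) (cscale (of_real (sqrt C)) (f x - S f x)))"
      by (rule aeq_cscale[OF aeq_cscale[OF lim_op_square[OF f]]])
    finally show "aeq M (W (W f)) (T f)"
      by (rule aeq_pointwise_trans)
        (use \<open>C > 0\<close> in \<open>simp add: S_def cscale_cscale flip: of_real_mult\<close>)
  next
    fix B assume B: "bounded_linear_op M B" and "ops_commute M B T"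
    then have "ops_commute M B S"
      unfolding S_def[abs_def]
      by (intro ops_commute_diff_op bounded_linear_op_id bounded_linear_op_cscale_op bounded_T
          ops_commute_cscale_op) (simp_all add: ops_commute_def aeq_refl)
    then show "ops_commute M B W"
      unfolding W_def[abs_def]
      by (intro ops_commute_cscale_op[OF B bounded_lim_op] ops_commute_lim_op_if_commute[OF B])
  qed
qed

text \<open>For $h = W_1 f - W_2 f$ the forms $\langle W_i h, h\rangle$ add up to
  $\langle (W_1^2 - W_2^2) f, h\rangle = 0$, so both vanish; hence $W_1 h = W_2 h = 0$ and
  $\lVert h\rVert^2 = \langle f, (W_1 - W_2) h\rangle = 0$.\<close>

lemma positive_sqrt_unique:
  assumes W1: "positive_op M W1" and W2: "positive_op M W2"
    and sq1: "\<And>f. f \<in> L2m M \<Longrightarrow> aeq M (W1 (W1 f)) (T f)"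
    and sq2: "\<And>f. f \<in> L2m M \<Longrightarrow> aeq M (W2 (W2 f)) (T f)"
    and comm: "ops_commute M W1 W2" and f: "f \<in> L2m M"
  shows "aeq M (W1 f) (W2 f)"
proof -
  have B1: "bounded_linear_op M W1" and B2: "bounded_linear_op M W2"
    using W1 W2 by (simp_all add: positive_op_bounded)
  have W1f: "W1 f \<in> L2m M" and W2f: "W2 f \<in> L2m M"
    using B1 B2 f by (simp_all add: bounded_linear_op_L2m)
  define h where "h = (\<lambda>x. W1 f x - W2 f x)"
  have h: "h \<in> L2m M" unfolding h_def using W1f W2f by (rule L2m_diff)
  have W1h: "W1 h \<in> L2m M" and W2h: "W2 h \<in> L2m M"
    using B1 B2 h by (simp_all add: bounded_linear_op_L2m)
  have "aeq M (\<lambda>x. W1 h x + W2 h x)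
      (\<lambda>x. (W1 (W1 f) x - W1 (W2 f) x) + (W2 (W1 f) x - W2 (W2 f) x))"
    unfolding h_def
    by (rule aeq_add[OF bounded_linear_op_diff[OF B1 W1f W2f] bounded_linear_op_diff[OF B2 W1f W2f]])
  also have "aeq M \<dots> (\<lambda>x. (T f x - W2 (W1 f) x) + (W2 (W1 f) x - T f x))"
    by (rule aeq_add[OF aeq_diff[OF sq1[OF f] ops_commuteD[OF comm f]]
          aeq_diff[OF aeq_refl sq2[OF f]]])
  finally have "aeq M (\<lambda>x. W1 h x + W2 h x) (\<lambda>x. 0)"
    by (rule aeq_pointwise_trans) simp
  then have "sip M (W1 h) h + sip M (W2 h) h = 0"
    using sip_cong[OF L2m_add[OF W1h W2h] h L2m_zero h _ aeq_refl] sip_add_left[OF W1h W2h h]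
      sip_zero_left[OF h] by simp
  then have "Re (sip M (W1 h) h) = 0" "Re (sip M (W2 h) h) = 0"
    using positive_op_nonneg[OF W1 h] positive_op_nonneg[OF W2 h] by (simp_all add: complex_eq_iff)
  then have "aeq M (W1 h) (\<lambda>x. 0)" "aeq M (W2 h) (\<lambda>x. 0)"
    by (simp_all add: positive_op_aeq_0_if_form_0[OF W1 h] positive_op_aeq_0_if_form_0[OF W2 h])
  then have "sip M f (W1 h) = 0" "sip M f (W2 h) = 0"
    using sip_cong[OF f W1h f L2m_zero aeq_refl] sip_cong[OF f W2h f L2m_zero aeq_refl]
      sip_commute[OF L2m_zero f] sip_zero_left[OF f] by simp_all
  then have "sip M h h = 0"
    unfolding h_def using sip_diff_left[OF W1f W2f h[unfolded h_def]]
      positive_op_sym[OF W1 f h] positive_op_sym[OF W2 f h] by (simp add: h_def)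
  then show ?thesis
    using sip_self[OF h] aeq_iff_l2norm_diff[OF W1f W2f] by (simp add: h_def)
qed

lemma op_sqrt:
  assumes "positive_op M T"
  shows "positive_op M (op_sqrt M T) \<and> (\<forall>f\<in>L2m M. aeq M (op_sqrt M T (op_sqrt M T f)) (T f))"
proof -
  obtain W where "positive_op M W" "\<And>f. f \<in> L2m M \<Longrightarrow> aeq M (W (W f)) (T f)"
    "\<And>B. bounded_linear_op M B \<Longrightarrow> ops_commute M B T \<Longrightarrow> ops_commute M B W"
    by (rule positive_sqrt_exists[OF assms]) (rule that)
  then have "positive_op M W \<and> (\<forall>f\<in>L2m M. aeq M (W (W f)) (T f))"
    by blast
  then show ?thesis
    unfolding op_sqrt_def
    by (rule someI[where P="\<lambda>V. positive_op M V \<and> (\<forall>f\<in>L2m M. aeq M (V (V f)) (T f))"])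
qed

lemma ops_commute_op_sqrt:
  fixes T B :: "('a \<Rightarrow> complex^'r::finite^'s::finite) \<Rightarrow> ('a \<Rightarrow> complex^'r^'s)"
  assumes T: "positive_op M T" and B: "bounded_linear_op M B" and BT: "ops_commute M B T"
  shows "ops_commute M B (op_sqrt M T)"
proof -
  let ?V = "op_sqrt M T"
  have V: "positive_op M ?V" and sq: "\<And>f. f \<in> L2m M \<Longrightarrow> aeq M (?V (?V f)) (T f)"
    using op_sqrt[OF T] by auto
  have BV: "bounded_linear_op M ?V" using V by (rule positive_op_bounded)
  obtain W where W: "positive_op M W" and sqW: "\<And>f. f \<in> L2m M \<Longrightarrow> aeq M (W (W f)) (T f)"
    and commW: "\<And>B. bounded_linear_op M B \<Longrightarrow> ops_commute M B T \<Longrightarrow> ops_commute M B W"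
    by (rule positive_sqrt_exists[OF T]) (rule that)
  have "ops_commute M ?V T"
    unfolding ops_commute_def
  proof
    fix f :: "'a \<Rightarrow> complex^'r^'s" assume f: "f \<in> L2m M"
    have Vf: "?V f \<in> L2m M" using BV f by (rule bounded_linear_op_L2m)
    have "aeq M (?V (T f)) (?V (?V (?V f)))"
      by (rule bounded_linear_op_aeq[OF BV bounded_linear_op_L2m[OF positive_op_bounded[OF T] f]
            bounded_linear_op_L2m[OF BV Vf] aeq_sym[OF sq[OF f]]])
    also have "aeq M \<dots> (T (?V f))" by (rule sq[OF Vf])
    finally show "aeq M (?V (T f)) (T (?V f))" .
  qed
  then have VW: "aeq M (?V f) (W f)" if "f \<in> L2m M" for f
    using positive_sqrt_unique[OF V W sq sqW commW[OF BV] that] by blast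
  show ?thesis
    unfolding ops_commute_def
  proof
    fix f :: "'a \<Rightarrow> complex^'r^'s" assume f: "f \<in> L2m M"
    have Bf: "B f \<in> L2m M" using B f by (rule bounded_linear_op_L2m)
    have "aeq M (B (?V f)) (B (W f))"
      by (rule bounded_linear_op_aeq[OF B bounded_linear_op_L2m[OF BV f]
            bounded_linear_op_L2m[OF positive_op_bounded[OF W] f] VW[OF f]])
    also have "aeq M \<dots> (W (B f))" by (rule ops_commuteD[OF commW[OF B BT] f])
    also have "aeq M \<dots> (?V (B f))" by (rule aeq_sym[OF VW[OF Bf]])
    finally show "aeq M (B (?V f)) (?V (B f))" .
  qed
qed

lemma adjointable_op_sqrt:
  assumes T: "positive_op M T" and "adjointable_op M T"
  shows "adjointable_op M (op_sqrt M T)"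
proof (rule adjointable_op_if_commutes_lmult)
  have V: "positive_op M (op_sqrt M T)" using op_sqrt[OF T] by blast
  show "bounded_linear_op M (op_sqrt M T)" using V by (rule positive_op_bounded)
  show "sip M (op_sqrt M T f) g = sip M f (op_sqrt M T g)" if "f \<in> L2m M" "g \<in> L2m M" for f g
    using V that by (rule positive_op_sym)
  show "ops_commute M (op_sqrt M T) (\<lambda>f x. X ** f x)" for X
    by (rule ops_commute_sym[OF ops_commute_op_sqrt[OF T bounded_linear_op_lmult ops_commute_sym[OF
          ops_commute_lmult_if_adjointable[OF positive_op_bounded[OF T] \<open>adjointable_op M T\<close>]]]])
qed

lemma bij_op_if_square_aeq:
  fixes W T :: "('a \<Rightarrow> complex^'r::finite^'s::finite) \<Rightarrow> ('a \<Rightarrow> complex^'r^'s)"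
  assumes W: "bounded_linear_op M W" and sq: "\<And>f. f \<in> L2m M \<Longrightarrow> aeq M (W (W f)) (T f)"
    and T: "bij_op M T"
  shows "bij_op M W"
  unfolding bij_op_def
proof (intro conjI ballI impI)
  fix f g :: "'a \<Rightarrow> complex^'r^'s"
  assume f: "f \<in> L2m M" and g: "g \<in> L2m M" and Wfg: "aeq M (W f) (W g)"
  have "aeq M (W (W f)) (W (W g))"
    by (rule bounded_linear_op_aeq[OF W bounded_linear_op_L2m[OF W f] bounded_linear_op_L2m[OF W g]
          Wfg])
  then have "aeq M (T f) (T g)"
    using aeq_trans[OF aeq_trans[OF aeq_sym[OF sq[OF f]]] sq[OF g]] by blast
  then show "aeq M f g" using T f g unfolding bij_op_def by blast
next
  fix g :: "'a \<Rightarrow> complex^'r^'s" assume "g \<in> L2m M"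
  then obtain f where f: "f \<in> L2m M" "aeq M (T f) g" using T unfolding bij_op_def by blast
  then show "\<exists>h\<in>L2m M. aeq M (W h) g"
    using aeq_trans[OF sq[OF f(1)] f(2)] bounded_linear_op_L2m[OF W f(1)] by blast
qed

lemma matrix_riesz_basis_image:
  assumes "matrix_onb M E" "bounded_linear_op M U" "bij_op M U" "adjointable_op M U"
  shows "matrix_riesz_basis M (\<lambda>k. U (E k))"
  using assms unfolding matrix_riesz_basis_def by (blast intro: aeq_refl)

theorem theorem3p6:
  fixes M :: "'g::{metric_space, topological_ab_group_add} measure"
    and T :: "('g \<Rightarrow> complex^'r::finite^'s::finite) \<Rightarrow> ('g \<Rightarrow> complex^'r^'s)"
    and E :: "nat \<Rightarrow> ('g \<Rightarrow> complex^'r^'s)"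
  assumes "lca_metr_sigma_compact TYPE('g)"
    and "haar_measure M"
    and "bounded_linear_op M T" and "bij_op M T" and "adjointable_op M T"
    and "matrix_onb M E"
    and "positive_op M T"
  shows "matrix_riesz_basis M (\<lambda>k. T (E k)) \<longleftrightarrow>
         matrix_riesz_basis M (\<lambda>k. op_sqrt M T (E k))"
proof -
  have sqrt_T: "positive_op M (op_sqrt M T)"
    "\<And>f. f \<in> L2m M \<Longrightarrow> aeq M (op_sqrt M T (op_sqrt M T f)) (T f)"
    using op_sqrt[OF \<open>positive_op M T\<close>] by auto
  have bounded: "bounded_linear_op M (op_sqrt M T)"
    using sqrt_T(1) by (rule positive_op_bounded)
  have "matrix_riesz_basis M (\<lambda>k. T (E k))"
    using assms by (intro matrix_riesz_basis_image)
  moreover have "matrix_riesz_basis M (\<lambda>k. op_sqrt M T (E k))"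
    using assms(4-7) bounded
    by (intro matrix_riesz_basis_image bij_op_if_square_aeq[OF bounded sqrt_T(2)]
        adjointable_op_sqrt)
  ultimately show ?thesis by blast
qed

end
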